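(* Let $\mathcal{H}_X,\mathcal{H}_Z,\mathcal{H}_A$ be finite-dimensional Hilbert spaces with $d_A=\dim\mathcal{H}_A$, and let $\mathcal{S}:\mathrm{CPTP}(\mathcal{H}_X,\mathcal{H}_Z\otimes\mathcal{H}_A)\to\mathrm{CPTP}(\mathcal{H}_X,\mathcal{H}_Z)$ be the partial-trace supermap $\mathcal{S}(\mathcal{N})=\mathrm{Tr}_A\circ\mathcal{N}$. Let $\Gamma\in\mathrm{CPTP}(\mathcal{H}_X,\mathcal{H}_Z\otimes\mathcal{H}_A)$ be such that the Choi operators $C_\Gamma$ and $C_{\mathcal{S}(\Gamma)}$ are full-rank (invertible). Let $\mathcal{R}:\mathrm{CPTP}(\mathcal{H}_X,\mathcal{H}_Z)\to\mathrm{CPTP}(\mathcal{H}_{X_{\rm r}},\mathcal{H}_{Z_{\rm r}}\otimes\mathcal{H}_{A_{\rm r}})$ be a superchannel, where $X_{\rm r},Z_{\rm r},A_{\rm r}$ are copies of $X,Z,A$, and suppose $\mathcal{R}(\mathcal{S}(\Gamma))=\Gamma$. Then there exist a finite-dimensional Hilbert space $\mathcal{H}_R$ with $d_R:=\dim\mathcal{H}_R\geq d_A$ and an operator $V:\mathcal{H}_X\otimes\mathcal{H}_Z\otimes\mathcal{H}_R\to\mathcal{H}_{X_{\rm r}}\otimes\mathcal{H}_{Z_{\rm r}}\otimes\mathcal{H}_{A_{\rm r}}$ with $VV^\dagger=\mathbb{1}_{X_{\rm r}Z_{\rm r}A_{\rm r}}$ (i.e. $V^\dagger$ is an isometry) such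 that for every operator $\tau$ on $\mathcal{H}_X\otimes\mathcal{H}_Z$, $$\mathcal{C}_{\mathcal{R}}(\tau)=C_\Gamma^{1/2}\,V\left(C_{\mathcal{S}(\Gamma)}^{-1/2}\,\tau\,C_{\mathcal{S}(\Gamma)}^{-1/2}\otimes\mathbb{1}_R\right)V^\dagger\,C_\Gamma^{1/2},$$ where $C_\Gamma^{1/2}$ is regarded as an operator on $\mathcal{H}_{X_{\rm r}}\otimes\mathcal{H}_{Z_{\rm r}}\otimes\mathcal{H}_{A_{\rm r}}$. Furthermore, if the rank of $\mathcal{R}$ equals $d_A$, then $d_R=d_A$ and $V$ is unitary.
   Context: $\mathrm{CPTP}(\mathcal{H},\mathcal{K})$ denotes the set of quantum channels (completely positive trace-preserving maps) from operators on $\mathcal{H}$ to operators on $\mathcal{K}$. The Choi operator of a linear map $\mathcal{N}$ from operators on $\mathcal{H}_{\rm in}$ (with orthonormal basis $\{|i\rangle\}$) to operators on $\mathcal{H}_{\rm out}$ is $C_{\mathcal{N}}=\sum_{i,j}|i\rangle\langle j|\otimes\mathcal{N}(|i\rangle\langle j|)$, an operator on $\mathcal{H}_{\rm in}\otimes\mathcal{H}_{\rm out}$. A superchannel (deterministic supermap) is a linear map on linear maps sending channels to channels that can be realized as $\mathcal{N}\mapsto\mathcal{E}_{\rm post}\circ(\mathcal{N}\otimes\mathcal{I}_M)\circ\mathcal{E}_{\rm pre}$ for some ancilla system $M$ and channels $\mathcal{E}_{\rm pre},\mathcal{E}_{\rm post}$; equivalently it induces a completely positive linear map $\mathcal{C}_{\mathcal{R}}$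 on Choi operators defined by $\mathcal{C}_{\mathcal{R}}(C_{\mathcal{N}})=C_{\mathcal{R}(\mathcal{N})}$ (extended linearly to all operators on $\mathcal{H}_X\otimes\mathcal{H}_Z$). The rank of a supermap $\mathcal{R}$ is the rank of its Choi operator, which equals the Kraus rank of $\mathcal{C}_{\mathcal{R}}$. *)

theory Defs
  imports "Jordan_Normal_Form.Schur_Decomposition" "Jordan_Normal_Form.DL_Rank"
begin

text \<open>Finite-dimensional Hilbert spaces are modelled as C^d; operators as complex
  matrices (Jordan_Normal_Form).  The tensor product C^a (x) C^b is C^(a*b) with
  basis index i*b + j for |i> (x) |j>.  Linear maps on operators are HOL functions
  complex mat => complex mat, only their behaviour on the relevant carrier matters.\<close>

definition kron :: "complex mat \<Rightarrow> complex mat \<Rightarrow> complex mat" where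
  "kron A B = mat (dim_row A * dim_row B) (dim_col A * dim_col B)
     (\<lambda>(i,j). A $$ (i div dim_row B, j div dim_col B) * B $$ (i mod dim_row B, j mod dim_col B))"

definition adj :: "complex mat \<Rightarrow> complex mat" where
  "adj A = mat_adjoint A"

definition mtrace :: "complex mat \<Rightarrow> complex" where
  "mtrace A = (\<Sum>i<dim_row A. A $$ (i,i))"

definition psd :: "nat \<Rightarrow> complex mat \<Rightarrow> bool" where
  "psd n A \<longleftrightarrow> A \<in> carrier_mat n n \<and>
     (\<forall>v \<in> carrier_vec n. Im (conjugate v \<bullet> (A *\<^sub>v v)) = 0 \<and> Re (conjugate v \<bullet> (A *\<^sub>v v)) \<ge> 0)"

definition mat_sqrt :: "nat \<Rightarrow> complex mat \<Rightarrow> complex mat" where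
  "mat_sqrt n A = (THE B. psd n B \<and> B * B = A)"

definition mat_inv :: "nat \<Rightarrow> complex mat \<Rightarrow> complex mat" where
  "mat_inv n A = (THE B. B \<in> carrier_mat n n \<and> A * B = 1\<^sub>m n \<and> B * A = 1\<^sub>m n)"

definition munit :: "nat \<Rightarrow> nat \<Rightarrow> nat \<Rightarrow> complex mat" where
  "munit n a b = mat n n (\<lambda>(i,j). if i = a \<and> j = b then 1 else 0)"

definition lin_map :: "nat \<Rightarrow> nat \<Rightarrow> (complex mat \<Rightarrow> complex mat) \<Rightarrow> bool" where
  "lin_map n m N \<longleftrightarrow>
     (\<forall>A \<in> carrier_mat n n. N A \<in> carrier_mat m m) \<and>
     (\<forall>A \<in> carrier_mat n n. \<forall>B \<in> carrier_mat n n. N (A + B) = N A + N B) \<and>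
     (\<forall>c. \<forall>A \<in> carrier_mat n n. N (c \<cdot>\<^sub>m A) = c \<cdot>\<^sub>m N A)"

text \<open>(N (x) id_M) for N : L(C^n) -> L(C^m), acting on L(C^n (x) C^k), system first.\<close>
definition tensor_id :: "nat \<Rightarrow> nat \<Rightarrow> nat \<Rightarrow> (complex mat \<Rightarrow> complex mat) \<Rightarrow> complex mat \<Rightarrow> complex mat" where
  "tensor_id n m k N X = mat (m * k) (m * k)
     (\<lambda>(r,s). N (mat n n (\<lambda>(i,j). X $$ (i * k + r mod k, j * k + s mod k))) $$ (r div k, s div k))"

text \<open>(id_k (x) N), ancilla first, acting on L(C^k (x) C^n).\<close>
definition id_tensor :: "nat \<Rightarrow> nat \<Rightarrow> nat \<Rightarrow> (complex mat \<Rightarrow> complex mat) \<Rightarrow> complex mat \<Rightarrow> complex mat" where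
  "id_tensor k n m N X = mat (k * m) (k * m)
     (\<lambda>(r,s). N (mat n n (\<lambda>(i,j). X $$ ((r div m) * n + i, (s div m) * n + j))) $$ (r mod m, s mod m))"

definition completely_positive :: "nat \<Rightarrow> nat \<Rightarrow> (complex mat \<Rightarrow> complex mat) \<Rightarrow> bool" where
  "completely_positive n m N \<longleftrightarrow>
     (\<forall>k X. psd (k * n) X \<longrightarrow> psd (k * m) (id_tensor k n m N X))"

definition trace_preserving :: "nat \<Rightarrow> (complex mat \<Rightarrow> complex mat) \<Rightarrow> bool" where
  "trace_preserving n N \<longleftrightarrow> (\<forall>A \<in> carrier_mat n n. mtrace (N A) = mtrace A)"

definition CPTP :: "nat \<Rightarrow> nat \<Rightarrow> (complex mat \<Rightarrow> complex mat) \<Rightarrow> bool" where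
  "CPTP n m N \<longleftrightarrow> lin_map n m N \<and> completely_positive n m N \<and> trace_preserving n N"

text \<open>Choi operator C_N = sum_{ij} |i><j| (x) N(|i><j|), on C^n (x) C^m.\<close>
definition choi :: "nat \<Rightarrow> nat \<Rightarrow> (complex mat \<Rightarrow> complex mat) \<Rightarrow> complex mat" where
  "choi n m N = mat (n * m) (n * m) (\<lambda>(r,s). N (munit n (r div m) (s div m)) $$ (r mod m, s mod m))"

text \<open>The unique linear map L(C^n) -> L(C^m) whose Choi operator is T.\<close>
definition choi_inv :: "nat \<Rightarrow> nat \<Rightarrow> complex mat \<Rightarrow> complex mat \<Rightarrow> complex mat" where
  "choi_inv n m T A = mat m m (\<lambda>(r,s). \<Sum>i<n. \<Sum>j<n. A $$ (i,j) * T $$ (i * m + r, j * m + s))"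

definition ptrace2 :: "nat \<Rightarrow> nat \<Rightarrow> complex mat \<Rightarrow> complex mat" where
  "ptrace2 a b X = mat a a (\<lambda>(i,j). \<Sum>k<b. X $$ (i * b + k, j * b + k))"

definition superchannel :: "nat \<Rightarrow> nat \<Rightarrow> nat \<Rightarrow> nat \<Rightarrow>
    ((complex mat \<Rightarrow> complex mat) \<Rightarrow> (complex mat \<Rightarrow> complex mat)) \<Rightarrow> bool" where
  "superchannel dX dZ dX' dZ' R \<longleftrightarrow>
     (\<exists>dM Epre Epost. CPTP dX' (dX * dM) Epre \<and> CPTP (dZ * dM) dZ' Epost \<and>
        (\<forall>N. lin_map dX dZ N \<longrightarrow>
           (\<forall>A \<in> carrier_mat dX' dX'. R N A = Epost (tensor_id dX dZ dM N (Epre A)))))"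

text \<open>Induced map on Choi operators: C_R(C_N) = C_{R(N)}, extended linearly.\<close>
definition choi_supermap :: "nat \<Rightarrow> nat \<Rightarrow> nat \<Rightarrow> nat \<Rightarrow>
    ((complex mat \<Rightarrow> complex mat) \<Rightarrow> (complex mat \<Rightarrow> complex mat)) \<Rightarrow> complex mat \<Rightarrow> complex mat" where
  "choi_supermap dX dZ dX' dZ' R T = choi dX' dZ' (R (choi_inv dX dZ T))"

definition supermap_rank :: "nat \<Rightarrow> nat \<Rightarrow> nat \<Rightarrow> nat \<Rightarrow>
    ((complex mat \<Rightarrow> complex mat) \<Rightarrow> (complex mat \<Rightarrow> complex mat)) \<Rightarrow> nat" where
  "supermap_rank dX dZ dX' dZ' R =
     vec_space.rank ((dX * dZ) * (dX' * dZ'))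
       (choi (dX * dZ) (dX' * dZ') (choi_supermap dX dZ dX' dZ' R) :: complex mat)"

end

(* Write the Choi map C_R of the recovery superchannel in Kraus form
   C_R(tau) = sum_k L_k tau L_k^dagger with p <= rank R operators, using the spectral
   decomposition of its Choi operator.  Recovery says C_R(sigma) = rho for sigma = C_S(Gamma)
   and rho = C_Gamma.  With s = sigma^(1/2) and r = rho^(1/2), the operators r^-1 L_k s,
   padded with zero blocks to d_R = max p d_A of them and placed side by side, form an
   operator V with V (X (x) 1) V^dagger = r^-1 C_R(s X s) r^-1.  Taking X = 1 gives
   V V^dagger = 1, taking X = s^-1 tau s^-1 gives the formula for C_R(tau), and if
   rank R = d_A then V is square and hence unitary. *)

theory Submission
  imports Defs
begin

section \<open>Adjoints, unitaries and the spectral theorem\<close>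

lemma adj_dims [simp]: "dim_row (adj A) = dim_col A" "dim_col (adj A) = dim_row A"
  by (auto simp: adj_def mat_adjoint_def)

lemma adj_index [simp]: "i < dim_col A \<Longrightarrow> j < dim_row A \<Longrightarrow> adj A $$ (i,j) = cnj (A $$ (j,i))"
  by (auto simp: adj_def mat_adjoint_def mat_of_rows_def cols_def)

lemma adj_carrier [simp]: "A \<in> carrier_mat n m \<Longrightarrow> adj A \<in> carrier_mat m n"
  unfolding carrier_mat_def by simp

lemma adj_adj [simp]: "adj (adj A) = A"
  by (rule eq_matI) auto

lemma adj_one [simp]: "adj (1\<^sub>m n) = 1\<^sub>m n"
  by (rule eq_matI) auto

lemma adj_mult: "A \<in> carrier_mat n m \<Longrightarrow> B \<in> carrier_mat m k \<Longrightarrow> adj (A * B) = adj B * adj A"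
  by (rule eq_matI) (simp_all add: scalar_prod_def mult.commute)

text \<open>Unlike \<open>mult_carrier_mat\<close>, this rule has no hidden intermediate dimension,
  so the simplifier can use it on nested products of square matrices.\<close>

lemma mult_carrier_mat_square [simp]:
  "A \<in> carrier_mat n n \<Longrightarrow> B \<in> carrier_mat n n \<Longrightarrow> A * B \<in> carrier_mat n n"
  by (rule mult_carrier_mat)

lemma index_mult_mat_sum:
  "A \<in> carrier_mat n m \<Longrightarrow> B \<in> carrier_mat m k \<Longrightarrow> i < n \<Longrightarrow> j < k \<Longrightarrow>
    (A * B) $$ (i,j) = (\<Sum>l<m. A $$ (i,l) * B $$ (l,j))"
  by (simp add: scalar_prod_def atLeast0LessThan)

lemma index_mult_mult_adj:
  assumes K: "K \<in> carrier_mat m n" and A: "A \<in> carrier_mat n n" and r: "r < m" and s: "s < m"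
  shows "(K * A * adj K) $$ (r,s) = (\<Sum>i<n. \<Sum>j<n. K $$ (r,i) * A $$ (i,j) * cnj (K $$ (s,j)))"
proof -
  have "(K * A * adj K) $$ (r,s) = (\<Sum>j<n. (K * A) $$ (r,j) * adj K $$ (j,s))"
    using K A r s by (intro index_mult_mat_sum) auto
  also have "\<dots> = (\<Sum>j<n. (\<Sum>i<n. K $$ (r,i) * A $$ (i,j)) * cnj (K $$ (s,j)))"
    using K A r s by (intro sum.cong refl, subst index_mult_mat_sum[of _ m n _ n]) auto
  also have "\<dots> = (\<Sum>j<n. \<Sum>i<n. K $$ (r,i) * A $$ (i,j) * cnj (K $$ (s,j)))"
    by (simp add: sum_distrib_right)
  also have "\<dots> = (\<Sum>i<n. \<Sum>j<n. K $$ (r,i) * A $$ (i,j) * cnj (K $$ (s,j)))"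
    by (rule sum.swap)
  finally show ?thesis .
qed

definition unitary :: "nat \<Rightarrow> complex mat \<Rightarrow> bool" where
  "unitary n U \<longleftrightarrow> U \<in> carrier_mat n n \<and> adj U * U = 1\<^sub>m n"

lemma unitary_carrier: "unitary n U \<Longrightarrow> U \<in> carrier_mat n n"
  by (simp add: unitary_def)

lemma unitary_adj_mult: "unitary n U \<Longrightarrow> adj U * U = 1\<^sub>m n"
  by (simp add: unitary_def)

lemma unitary_mult_adj: "unitary n U \<Longrightarrow> U * adj U = 1\<^sub>m n"
  unfolding unitary_def using mat_mult_left_right_inverse[of "adj U" n U] by simp

lemma unitary_mult:
  assumes U: "unitary n U" and W: "unitary n W"
  shows "unitary n (U * W)"
proof -
  have c: "U \<in> carrier_mat n n" "W \<in> carrier_mat n n" using U W by (auto simp: unitary_def)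
  have a: "adj U \<in> carrier_mat n n" "adj W \<in> carrier_mat n n" using c by auto
  have "adj (U * W) * (U * W) = adj W * (adj U * (U * W))"
    by (simp only: adj_mult[OF c] assoc_mult_mat[OF a(2) a(1) mult_carrier_mat[OF c]])
  also have "adj U * (U * W) = (adj U * U) * W" by (rule assoc_mult_mat[OF a(1) c, symmetric])
  also have "\<dots> = W" using U c by (simp add: unitary_def)
  also have "adj W * W = 1\<^sub>m n" using W by (simp add: unitary_def)
  finally show ?thesis using c by (simp add: unitary_def)
qed

lemma unitary_cols_orthonormal:
  assumes "unitary n U" "k < n" "l < n"
  shows "(\<Sum>i<n. cnj (U $$ (i,k)) * U $$ (i,l)) = (if k = l then 1 else 0)"
proof -
  have "(\<Sum>i<n. cnj (U $$ (i,k)) * U $$ (i,l)) = (adj U * U) $$ (k,l)"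
    using assms by (subst index_mult_mat_sum[of _ n n _ n]) (auto simp: unitary_def)
  thus ?thesis using assms by (simp add: unitary_def)
qed

lemma corthogonal_self_pos:
  assumes ws: "set ws \<subseteq> carrier_vec n" "corthogonal ws" and i: "i < length ws"
  shows "Re (ws ! i \<bullet>c ws ! i) > 0" "Im (ws ! i \<bullet>c ws ! i) = 0"
proof -
  have w: "ws ! i \<in> carrier_vec n" using ws i by auto
  have "ws ! i \<bullet>c ws ! i \<noteq> 0" using corthogonalD[OF ws(2) i i] by simp
  hence "ws ! i \<noteq> 0\<^sub>v n" using w by auto
  hence "ws ! i \<bullet>c ws ! i > 0" using conjugate_square_greater_0_vec[OF w] by auto
  thus "Re (ws ! i \<bullet>c ws ! i) > 0" "Im (ws ! i \<bullet>c ws ! i) = 0" by (auto simp: less_complex_def)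
qed

lemma unitary_of_corthogonal:
  assumes ws: "set ws \<subseteq> carrier_vec n" "corthogonal ws" "length ws = n"
  shows "\<exists>W. unitary n W \<and> (\<forall>j<n. \<exists>c. c \<noteq> 0 \<and> col W j = c \<cdot>\<^sub>v ws ! j)"
proof -
  define nr where "nr w = sqrt (Re (w \<bullet>c w))" for w :: "complex vec"
  define W where "W = mat_of_cols n (map (\<lambda>w. complex_of_real (1 / nr w) \<cdot>\<^sub>v w) ws)"
  have wsc: "ws ! i \<in> carrier_vec n" if "i < n" for i using ws that by auto
  have pos: "Re (ws ! i \<bullet>c ws ! i) > 0" "Im (ws ! i \<bullet>c ws ! i) = 0" if "i < n" for i
    using corthogonal_self_pos[OF ws(1,2)] that ws(3) by auto
  have W: "W \<in> carrier_mat n n" unfolding W_def using mat_of_cols_carrier(1) ws(3) by (metis length_map)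
  have Wij: "W $$ (i,j) = complex_of_real (1 / nr (ws ! j)) * (ws ! j) $ i" if "i < n" "j < n" for i j
    using that ws wsc[OF that(2)] by (simp add: W_def mat_of_cols_def)
  have "adj W * W = 1\<^sub>m n"
  proof (rule eq_matI)
    fix i j assume "i < dim_row (1\<^sub>m n)" "j < dim_col (1\<^sub>m n)"
    hence ij: "i < n" "j < n" by auto
    have "(adj W * W) $$ (i,j) = (\<Sum>k<n. cnj (W $$ (k,i)) * W $$ (k,j))"
      using W ij by (subst index_mult_mat_sum[of _ n n _ n]) auto
    also have "\<dots> = complex_of_real (1 / nr (ws ! i)) * complex_of_real (1 / nr (ws ! j)) * (ws ! j \<bullet>c ws ! i)"
      using ij wsc[OF ij(1)] wsc[OF ij(2)]
      by (simp add: Wij scalar_prod_def sum_distrib_left atLeast0LessThan mult_ac)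
    also have "\<dots> = 1\<^sub>m n $$ (i,j)"
    proof (cases "i = j")
      case True
      have "nr (ws ! i) > 0" using pos[OF ij(1)] by (simp add: nr_def)
      moreover have "ws ! i \<bullet>c ws ! i = complex_of_real (nr (ws ! i))^2"
        using pos[OF ij(1)] by (simp add: nr_def complex_eq_iff power2_eq_square)
      ultimately show ?thesis using True ij by (simp add: field_simps power2_eq_square)
    next
      case False
      hence "ws ! j \<bullet>c ws ! i = 0" using corthogonalD[OF ws(2), of j i] ij ws by auto
      thus ?thesis using False ij by simp
    qed
    finally show "(adj W * W) $$ (i,j) = 1\<^sub>m n $$ (i,j)" .
  qed (use W in auto)
  moreover have "col W j = complex_of_real (1 / nr (ws ! j)) \<cdot>\<^sub>v ws ! j" if "j < n" for j
    using that ws wsc[OF that] by (simp add: W_def col_mat_of_cols)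
  moreover have "complex_of_real (1 / nr (ws ! j)) \<noteq> 0" if "j < n" for j
    using pos[OF that] by (simp add: nr_def)
  ultimately show ?thesis using W unfolding unitary_def by blast
qed

lemma unitary_with_first_column:
  assumes v: "v \<in> carrier_vec n" and v0: "v \<noteq> 0\<^sub>v n"
  shows "\<exists>W c. unitary n W \<and> c \<noteq> 0 \<and> col W 0 = c \<cdot>\<^sub>v v"
proof -
  interpret cof_vec_space n "TYPE(complex)" .
  define b where "b = basis_completion v"
  from basis_completion[OF v v0, folded b_def]
  have b: "set b \<subseteq> carrier_vec n" and dist_b: "distinct b" and indep: "\<not> lin_dep (set b)"
    and hdb: "hd b = v" and len_b: "length b = n" by auto
  have n0: "n \<noteq> 0" using v0 v len_b hdb by (cases b) auto
  from hdb len_b n0 obtain vs where bv: "b = v # vs" by (cases b) auto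
  define ws where "ws = gram_schmidt n b"
  from gram_schmidt_result[OF b dist_b indep refl, folded ws_def]
  have ws: "set ws \<subseteq> carrier_vec n" "corthogonal ws" "length ws = n" by (auto simp: len_b)
  have "ws ! 0 = v"
    using gram_schmidt_hd[OF v, of vs, folded bv ws_def] ws n0 by (cases ws) auto
  thus ?thesis using unitary_of_corthogonal[OF ws] n0 by auto
qed

definition real_diag_mat :: "nat \<Rightarrow> (nat \<Rightarrow> real) \<Rightarrow> complex mat" where
  "real_diag_mat n d = mat n n (\<lambda>(i,j). if i = j then complex_of_real (d i) else 0)"

lemma real_diag_mat_carrier [simp]: "real_diag_mat n d \<in> carrier_mat n n"
  by (simp add: real_diag_mat_def)

lemma real_diag_mat_dims [simp]: "dim_row (real_diag_mat n d) = n" "dim_col (real_diag_mat n d) = n"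
  by (simp_all add: real_diag_mat_def)

lemma index_real_diag_mat_mult:
  assumes M: "M \<in> carrier_mat n m" and i: "i < n" and j: "j < m"
  shows "(real_diag_mat n d * M) $$ (i,j) = complex_of_real (d i) * M $$ (i,j)"
proof -
  have "(real_diag_mat n d * M) $$ (i,j) = (\<Sum>l<n. real_diag_mat n d $$ (i,l) * M $$ (l,j))"
    using M i j by (intro index_mult_mat_sum) auto
  also have "\<dots> = (\<Sum>l<n. if l = i then complex_of_real (d i) * M $$ (i,j) else 0)"
    using i by (intro sum.cong refl) (auto simp: real_diag_mat_def)
  finally show ?thesis using i by simp
qed

lemma index_mult_real_diag_mat:
  assumes M: "M \<in> carrier_mat m n" and i: "i < m" and j: "j < n"
  shows "(M * real_diag_mat n d) $$ (i,j) = M $$ (i,j) * complex_of_real (d j)"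
proof -
  have "(M * real_diag_mat n d) $$ (i,j) = (\<Sum>l<n. M $$ (i,l) * real_diag_mat n d $$ (l,j))"
    using M i j by (intro index_mult_mat_sum) auto
  also have "\<dots> = (\<Sum>l<n. if l = j then M $$ (i,j) * complex_of_real (d j) else 0)"
    using j by (intro sum.cong refl) (auto simp: real_diag_mat_def)
  finally show ?thesis using j by simp
qed

lemma real_diag_mat_mult: "real_diag_mat n a * real_diag_mat n b = real_diag_mat n (\<lambda>i. a i * b i)"
proof (rule eq_matI)
  fix i j assume "i < dim_row (real_diag_mat n (\<lambda>i. a i * b i))" "j < dim_col (real_diag_mat n (\<lambda>i. a i * b i))"
  hence ij: "i < n" "j < n" by auto
  show "(real_diag_mat n a * real_diag_mat n b) $$ (i, j) = real_diag_mat n (\<lambda>i. a i * b i) $$ (i, j)"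
    unfolding index_real_diag_mat_mult[OF real_diag_mat_carrier ij] using ij by (simp add: real_diag_mat_def)
qed auto

lemma index_unitary_diag:
  assumes U: "U \<in> carrier_mat n n" and i: "i < n" and j: "j < n"
  shows "(U * real_diag_mat n d * adj U) $$ (i,j) =
    (\<Sum>k<n. U $$ (i,k) * complex_of_real (d k) * cnj (U $$ (j,k)))"
proof -
  have "(U * real_diag_mat n d * adj U) $$ (i,j) = (\<Sum>k<n. \<Sum>l<n. U $$ (i,k) * real_diag_mat n d $$ (k,l) * cnj (U $$ (j,l)))"
    by (rule index_mult_mult_adj[OF U real_diag_mat_carrier i j])
  also have "\<dots> = (\<Sum>k<n. U $$ (i,k) * complex_of_real (d k) * cnj (U $$ (j,k)))"
  proof (intro sum.cong refl)
    fix k assume "k \<in> {..<n}"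
    have "(\<Sum>l<n. U $$ (i,k) * real_diag_mat n d $$ (k,l) * cnj (U $$ (j,l))) =
        (\<Sum>l<n. if l = k then U $$ (i,k) * complex_of_real (d k) * cnj (U $$ (j,k)) else 0)"
      using \<open>k \<in> {..<n}\<close> by (intro sum.cong refl) (auto simp: real_diag_mat_def)
    thus "(\<Sum>l<n. U $$ (i,k) * real_diag_mat n d $$ (k,l) * cnj (U $$ (j,l))) =
        U $$ (i,k) * complex_of_real (d k) * cnj (U $$ (j,k))"
      using \<open>k \<in> {..<n}\<close> by simp
  qed
  finally show ?thesis .
qed

lemma hermitian_lower_block:
  assumes M: "M \<in> carrier_mat (Suc n) (Suc n)" "adj M = M"
  shows "adj (mat n n (\<lambda>(i,j). M $$ (Suc i, Suc j))) = mat n n (\<lambda>(i,j). M $$ (Suc i, Suc j))"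
proof (rule eq_matI)
  fix i j assume "i < dim_row (mat n n (\<lambda>(i,j). M $$ (Suc i, Suc j)))" "j < dim_col (mat n n (\<lambda>(i,j). M $$ (Suc i, Suc j)))"
  hence ij: "i < n" "j < n" by auto
  hence "adj M $$ (Suc i, Suc j) = cnj (M $$ (Suc j, Suc i))" using M(1) by simp
  thus "adj (mat n n (\<lambda>(i,j). M $$ (Suc i, Suc j))) $$ (i,j) = mat n n (\<lambda>(i,j). M $$ (Suc i, Suc j)) $$ (i,j)"
    using M(2) ij by simp
qed auto

lemma complex_eigenvector_exists:
  fixes A :: "complex mat"
  assumes A: "A \<in> carrier_mat n n" and n: "n > 0"
  shows "\<exists>e v. v \<in> carrier_vec n \<and> v \<noteq> 0\<^sub>v n \<and> A *\<^sub>v v = e \<cdot>\<^sub>v v"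
proof -
  have "degree (char_poly A) = n" using degree_monic_char_poly[OF A] by simp
  hence "\<not> constant (poly (char_poly A))" using n by (simp add: constant_degree)
  from fundamental_theorem_of_algebra[OF this] obtain e where "poly (char_poly A) e = 0" by blast
  hence "eigenvalue A e" using eigenvalue_root_char_poly[OF A] by simp
  then obtain v where "eigenvector A v e" unfolding eigenvalue_def by blast
  thus ?thesis using A unfolding eigenvector_def by auto
qed

lemma hermitian_adj_mult_mult:
  assumes A: "A \<in> carrier_mat n n" "adj A = A" and W: "W \<in> carrier_mat n n"
  shows "adj (adj W * A * W) = adj W * A * W"
  using assms by (simp add: adj_mult[of _ n n _ n] assoc_mult_mat[of _ n n _ n _ n])

lemma hermitian_deflation:
  assumes A: "A \<in> carrier_mat (Suc n) (Suc n)" "adj A = A" and W: "unitary (Suc n) W"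
    and ev: "A *\<^sub>v col W 0 = e \<cdot>\<^sub>v col W 0"
  shows "cnj e = e"
    and "i < Suc n \<Longrightarrow> (adj W * A * W) $$ (i,0) = (if i = 0 then e else 0)"
    and "i < Suc n \<Longrightarrow> (adj W * A * W) $$ (0,i) = (if i = 0 then e else 0)"
proof -
  define A' where "A' = adj W * A * W"
  have Wc: "W \<in> carrier_mat (Suc n) (Suc n)" using W by (rule unitary_carrier)
  have A': "A' \<in> carrier_mat (Suc n) (Suc n)" unfolding A'_def using A Wc by (metis adj_carrier mult_carrier_mat)
  have hA': "adj A' = A'" unfolding A'_def by (rule hermitian_adj_mult_mult[OF A Wc])
  have col0: "A' $$ (i,0) = (if i = 0 then e else 0)" if i: "i < Suc n" for i
  proof -
    have "A' $$ (i,0) = row (adj W) i \<bullet> (A *\<^sub>v col W 0)"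
      unfolding A'_def using A Wc i
      by (simp add: assoc_mult_mat[of _ "Suc n" "Suc n" _ "Suc n" _ "Suc n"] mult_mat_vec_def)
    also have "\<dots> = e * (adj W * W) $$ (i,0)"
      unfolding ev using Wc i by (simp add: scalar_prod_smult_right)
    finally show ?thesis using W i by (simp add: unitary_def)
  qed
  show real: "cnj e = e" using arg_cong[OF hA', of "\<lambda>M. M $$ (0,0)"] col0[of 0] A' by simp
  show "i < Suc n \<Longrightarrow> (adj W * A * W) $$ (i,0) = (if i = 0 then e else 0)"
    using col0 by (simp add: A'_def)
  show "(adj W * A * W) $$ (0,i) = (if i = 0 then e else 0)" if i: "i < Suc n"
  proof -
    have "A' $$ (0,i) = cnj (A' $$ (i,0))" using arg_cong[OF hA', of "\<lambda>M. M $$ (0,i)"] A' i by simp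
    thus ?thesis using col0[OF i] real by (simp add: A'_def)
  qed
qed

definition one_dsum :: "nat \<Rightarrow> complex mat \<Rightarrow> complex mat" where
  "one_dsum n U = mat (Suc n) (Suc n)
     (\<lambda>(i,j). if i = 0 \<and> j = 0 then 1 else if i = 0 \<or> j = 0 then 0 else U $$ (i - 1, j - 1))"

lemma one_dsum_dims [simp]: "dim_row (one_dsum n U) = Suc n" "dim_col (one_dsum n U) = Suc n"
  by (simp_all add: one_dsum_def)

lemma one_dsum_carrier [simp]: "one_dsum n U \<in> carrier_mat (Suc n) (Suc n)"
  by (simp add: carrier_matI)

lemma index_one_dsum:
  "j < Suc n \<Longrightarrow> one_dsum n U $$ (0,j) = (if j = 0 then 1 else 0)"
  "j < Suc n \<Longrightarrow> one_dsum n U $$ (j,0) = (if j = 0 then 1 else 0)"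
  "i < n \<Longrightarrow> j < n \<Longrightarrow> one_dsum n U $$ (Suc i, Suc j) = U $$ (i,j)"
  by (auto simp: one_dsum_def)

lemma unitary_one_dsum:
  assumes U: "unitary n U"
  shows "unitary (Suc n) (one_dsum n U)"
  unfolding unitary_def
proof (intro conjI one_dsum_carrier eq_matI)
  fix i j assume "i < dim_row (1\<^sub>m (Suc n))" "j < dim_col (1\<^sub>m (Suc n))"
  hence ij: "i < Suc n" "j < Suc n" by auto
  have "(adj (one_dsum n U) * one_dsum n U) $$ (i,j) =
      (\<Sum>k<Suc n. cnj (one_dsum n U $$ (k,i)) * one_dsum n U $$ (k,j))"
    using ij by (subst index_mult_mat_sum[of _ "Suc n" "Suc n" _ "Suc n"]) auto
  also have "\<dots> = cnj (one_dsum n U $$ (0,i)) * one_dsum n U $$ (0,j) +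
      (\<Sum>k<n. cnj (one_dsum n U $$ (Suc k,i)) * one_dsum n U $$ (Suc k,j))"
    by (rule sum.lessThan_Suc_shift)
  also have "\<dots> = 1\<^sub>m (Suc n) $$ (i,j)"
  proof (cases i; cases j)
    fix i' j' assume ij': "i = Suc i'" "j = Suc j'"
    have "(\<Sum>k<n. cnj (one_dsum n U $$ (Suc k,i)) * one_dsum n U $$ (Suc k,j)) =
        (\<Sum>k<n. cnj (U $$ (k,i')) * U $$ (k,j'))"
      using ij ij' by (intro sum.cong) (auto simp: index_one_dsum)
    thus ?thesis using unitary_cols_orthonormal[OF U, of i' j'] ij ij' by (simp add: index_one_dsum)
  qed (use ij in \<open>auto simp: index_one_dsum\<close>)
  finally show "(adj (one_dsum n U) * one_dsum n U) $$ (i,j) = 1\<^sub>m (Suc n) $$ (i,j)" .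
qed auto

lemma one_dsum_diag:
  assumes U: "U \<in> carrier_mat n n" and M: "M \<in> carrier_mat (Suc n) (Suc n)"
    and M0: "\<And>i. i < Suc n \<Longrightarrow> M $$ (i,0) = (if i = 0 then complex_of_real (d 0) else 0)"
      "\<And>i. i < Suc n \<Longrightarrow> M $$ (0,i) = (if i = 0 then complex_of_real (d 0) else 0)"
    and M1: "mat n n (\<lambda>(i,j). M $$ (Suc i, Suc j)) = U * real_diag_mat n (\<lambda>k. d (Suc k)) * adj U"
  shows "M = one_dsum n U * real_diag_mat (Suc n) d * adj (one_dsum n U)"
proof (rule eq_matI)
  let ?B = "one_dsum n U"
  fix i j assume "i < dim_row (?B * real_diag_mat (Suc n) d * adj ?B)" "j < dim_col (?B * real_diag_mat (Suc n) d * adj ?B)"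
  hence ij: "i < Suc n" "j < Suc n" by auto
  have "(?B * real_diag_mat (Suc n) d * adj ?B) $$ (i,j) =
      (\<Sum>k<Suc n. ?B $$ (i,k) * complex_of_real (d k) * cnj (?B $$ (j,k)))"
    by (rule index_unitary_diag[OF one_dsum_carrier ij])
  also have "\<dots> = ?B $$ (i,0) * complex_of_real (d 0) * cnj (?B $$ (j,0)) +
      (\<Sum>k<n. ?B $$ (i,Suc k) * complex_of_real (d (Suc k)) * cnj (?B $$ (j,Suc k)))"
    by (rule sum.lessThan_Suc_shift)
  also have "\<dots> = M $$ (i,j)"
  proof (cases i; cases j)
    fix i' j' assume ij': "i = Suc i'" "j = Suc j'"
    have "(\<Sum>k<n. ?B $$ (i,Suc k) * complex_of_real (d (Suc k)) * cnj (?B $$ (j,Suc k))) =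
        (\<Sum>k<n. U $$ (i',k) * complex_of_real (d (Suc k)) * cnj (U $$ (j',k)))"
      using ij ij' by (intro sum.cong) (auto simp: index_one_dsum)
    also have "\<dots> = (U * real_diag_mat n (\<lambda>k. d (Suc k)) * adj U) $$ (i',j')"
      using ij ij' by (intro index_unitary_diag[symmetric, OF U]) auto
    also have "\<dots> = M $$ (i,j)" unfolding M1[symmetric] using ij ij' by simp
    finally show ?thesis using ij ij' by (simp add: index_one_dsum)
  qed (use ij M0 in \<open>auto simp: index_one_dsum\<close>)
  finally show "M $$ (i,j) = (?B * real_diag_mat (Suc n) d * adj ?B) $$ (i,j)" by (rule sym)
qed (use M in auto)

theorem hermitian_spectral:
  assumes "A \<in> carrier_mat n n" "adj A = A"
  shows "\<exists>U d. unitary n U \<and> A = U * real_diag_mat n d * adj U"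
  using assms
proof (induction n arbitrary: A)
  case 0
  have "A = 1\<^sub>m 0 * real_diag_mat 0 (\<lambda>_. 0) * adj (1\<^sub>m 0)" using 0 by (intro eq_matI) auto
  moreover have "unitary 0 (1\<^sub>m 0)" by (simp add: unitary_def)
  ultimately show ?case by blast
next
  case (Suc n)
  have A: "A \<in> carrier_mat (Suc n) (Suc n)" and hA: "adj A = A" by fact+
  obtain e v where v: "v \<in> carrier_vec (Suc n)" "v \<noteq> 0\<^sub>v (Suc n)" and ev: "A *\<^sub>v v = e \<cdot>\<^sub>v v"
    using complex_eigenvector_exists[OF A] by auto
  obtain W c where W: "unitary (Suc n) W" and c: "col W 0 = c \<cdot>\<^sub>v v"
    using unitary_with_first_column[OF v] by blast
  have Wc: "W \<in> carrier_mat (Suc n) (Suc n)" using W by (rule unitary_carrier)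
  have evW: "A *\<^sub>v col W 0 = e \<cdot>\<^sub>v col W 0"
    unfolding c using A v ev by (simp add: mult_mat_vec smult_smult_assoc mult.commute)
  define A' where "A' = adj W * A * W"
  have A': "A' \<in> carrier_mat (Suc n) (Suc n)" unfolding A'_def using A Wc by (metis adj_carrier mult_carrier_mat)
  define A3 where "A3 = mat n n (\<lambda>(i,j). A' $$ (Suc i, Suc j))"
  have hA3: "adj A3 = A3"
    unfolding A3_def A'_def by (rule hermitian_lower_block[OF A'[unfolded A'_def] hermitian_adj_mult_mult[OF A hA Wc]])
  obtain U3 d3 where U3: "unitary n U3" and A3eq: "A3 = U3 * real_diag_mat n d3 * adj U3"
    using Suc.IH[OF _ hA3] by (auto simp: A3_def)
  define d where "d i = (if i = 0 then Re e else d3 (i - 1))" for i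
  have e: "complex_of_real (Re e) = e"
    using hermitian_deflation(1)[OF A hA W evW] by (simp add: complex_eq_iff)
  have A'eq: "A' = one_dsum n U3 * real_diag_mat (Suc n) d * adj (one_dsum n U3)"
    using unitary_carrier[OF U3] A' hermitian_deflation(2,3)[OF A hA W evW] A3eq e
    by (intro one_dsum_diag) (auto simp: A'_def A3_def d_def)
  define U where "U = W * one_dsum n U3"
  have U: "unitary (Suc n) U" unfolding U_def by (rule unitary_mult[OF W unitary_one_dsum[OF U3]])
  have "U * real_diag_mat (Suc n) d * adj U = W * A' * adj W"
    unfolding A'eq U_def using Wc
    by (simp add: adj_mult[OF Wc one_dsum_carrier] assoc_mult_mat[of _ "Suc n" "Suc n" _ "Suc n" _ "Suc n"])
  also have "\<dots> = (W * adj W) * A * (W * adj W)"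
    unfolding A'_def using A Wc by (simp add: assoc_mult_mat[of _ "Suc n" "Suc n" _ "Suc n" _ "Suc n"])
  also have "\<dots> = A" using unitary_mult_adj[OF W] A by simp
  finally show ?case using U by metis
qed

section \<open>Positive semidefinite matrices and their square roots\<close>

lemma quadratic_form_expand:
  assumes A: "A \<in> carrier_mat n n" and v: "v \<in> carrier_vec n"
  shows "conjugate v \<bullet> (A *\<^sub>v v) = (\<Sum>i<n. \<Sum>j<n. cnj (v $ i) * A $$ (i,j) * v $ j)"
  using A v by (simp add: scalar_prod_def atLeast0LessThan sum_distrib_left mult_ac)

lemma psd_sum_outer_products:
  assumes A: "A \<in> carrier_mat n n" and K: "finite K" and c: "\<And>k. k \<in> K \<Longrightarrow> c k \<ge> 0"
    and Aij: "\<And>i j. i < n \<Longrightarrow> j < n \<Longrightarrow> A $$ (i,j) = (\<Sum>k\<in>K. complex_of_real (c k) * f k i * cnj (f k j))"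
  shows "psd n A"
  unfolding psd_def
proof (intro conjI[OF A] ballI)
  fix v :: "complex vec" assume v: "v \<in> carrier_vec n"
  define w where "w k = (\<Sum>i<n. cnj (v $ i) * f k i)" for k
  define F where "F i j k = complex_of_real (c k) * (cnj (v $ i) * f k i) * cnj (cnj (v $ j) * f k j)" for i j k
  have "conjugate v \<bullet> (A *\<^sub>v v) = (\<Sum>i<n. \<Sum>j<n. \<Sum>k\<in>K. F i j k)"
    unfolding quadratic_form_expand[OF A v] F_def
    by (intro sum.cong refl) (simp add: Aij sum_distrib_left sum_distrib_right mult_ac)
  also have "\<dots> = (\<Sum>i<n. \<Sum>k\<in>K. \<Sum>j<n. F i j k)"
    by (rule sum.cong[OF refl], rule sum.swap)
  also have "\<dots> = (\<Sum>k\<in>K. \<Sum>i<n. \<Sum>j<n. F i j k)"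
    by (rule sum.swap)
  also have "\<dots> = (\<Sum>k\<in>K. complex_of_real (c k) * (w k * cnj (w k)))"
  proof (rule sum.cong[OF refl])
    fix k
    have "w k * cnj (w k) = (\<Sum>i<n. \<Sum>j<n. (cnj (v $ i) * f k i) * cnj (cnj (v $ j) * f k j))"
      unfolding w_def cnj_sum by (rule sum_product)
    thus "(\<Sum>i<n. \<Sum>j<n. F i j k) = complex_of_real (c k) * (w k * cnj (w k))"
      unfolding F_def by (simp add: sum_distrib_left mult.assoc)
  qed
  finally have eq: "conjugate v \<bullet> (A *\<^sub>v v) = (\<Sum>k\<in>K. complex_of_real (c k) * (w k * cnj (w k)))" .
  show "Im (conjugate v \<bullet> (A *\<^sub>v v)) = 0 \<and> 0 \<le> Re (conjugate v \<bullet> (A *\<^sub>v v))"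
    unfolding eq Im_sum Re_sum using c
    by (auto simp: complex_mult_cnj simp del: of_real_add of_real_power intro: sum_nonneg)
qed

lemma quadratic_form_unit_vec:
  fixes A :: "complex mat"
  assumes A: "A \<in> carrier_mat n n" and i: "i < n"
  shows "conjugate (unit_vec n i) \<bullet> (A *\<^sub>v unit_vec n i) = A $$ (i,i)"
proof -
  have v: "(unit_vec n i :: complex vec) \<in> carrier_vec n" by simp
  have "conjugate (unit_vec n i) \<bullet> (A *\<^sub>v unit_vec n i) =
      (\<Sum>k<n. \<Sum>l<n. if k = i then if l = i then A $$ (i,i) else 0 else 0)"
    unfolding quadratic_form_expand[OF A v] by (intro sum.cong refl) (auto simp: unit_vec_def)
  also have "\<dots> = (\<Sum>k<n. if k = i then A $$ (i,i) else 0)"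
    using i by (intro sum.cong refl) auto
  finally show ?thesis using i by simp
qed

lemma quadratic_form_two_unit_vecs:
  assumes A: "A \<in> carrier_mat n n" and ij: "i < n" "j < n" "i \<noteq> j"
  shows "conjugate (unit_vec n i + c \<cdot>\<^sub>v unit_vec n j) \<bullet> (A *\<^sub>v (unit_vec n i + c \<cdot>\<^sub>v unit_vec n j)) =
    A $$ (i,i) + c * A $$ (i,j) + cnj c * A $$ (j,i) + cnj c * c * A $$ (j,j)"
    (is "conjugate ?v \<bullet> _ = _")
proof -
  have v: "?v \<in> carrier_vec n" by simp
  have vl: "?v $ l = (if l = i then 1 else 0) + (if l = j then c else 0)" if "l < n" for l
    using that by (simp add: unit_vec_def)
  have inner: "(\<Sum>l<n. A $$ (k,l) * ?v $ l) = A $$ (k,i) + c * A $$ (k,j)" for k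
  proof -
    have "(\<Sum>l<n. A $$ (k,l) * ?v $ l) = (\<Sum>l<n. (if l = i then A $$ (k,i) else 0) + (if l = j then c * A $$ (k,j) else 0))"
      using ij by (intro sum.cong refl) (auto simp: vl)
    thus ?thesis using ij by (simp only: sum.distrib) simp
  qed
  have "conjugate ?v \<bullet> (A *\<^sub>v ?v) = (\<Sum>k<n. cnj (?v $ k) * (A $$ (k,i) + c * A $$ (k,j)))"
    unfolding quadratic_form_expand[OF A v] inner[symmetric] by (simp add: sum_distrib_left mult_ac)
  also have "\<dots> = (\<Sum>k<n. (if k = i then A $$ (i,i) + c * A $$ (i,j) else 0) + (if k = j then cnj c * (A $$ (j,i) + c * A $$ (j,j)) else 0))"
    using ij by (intro sum.cong refl) (auto simp: vl)
  also have "\<dots> = A $$ (i,i) + c * A $$ (i,j) + cnj c * A $$ (j,i) + cnj c * c * A $$ (j,j)"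
    using ij by (simp only: sum.distrib) (simp add: algebra_simps)
  finally show ?thesis .
qed

lemma psd_hermitian:
  assumes "psd n A" shows "adj A = A"
proof -
  have A: "A \<in> carrier_mat n n" using assms by (simp add: psd_def)
  have q: "Im (conjugate v \<bullet> (A *\<^sub>v v)) = 0" if "v \<in> carrier_vec n" for v
    using assms that by (simp add: psd_def)
  have diag: "Im (A $$ (i,i)) = 0" if "i < n" for i
    using q[of "unit_vec n i"] quadratic_form_unit_vec[OF A that] by simp
  show ?thesis
  proof (rule eq_matI)
    fix i j assume "i < dim_row A" "j < dim_col A"
    hence ij: "i < n" "j < n" using A by auto
    show "adj A $$ (i,j) = A $$ (i,j)"
    proof (cases "i = j")
      case True thus ?thesis using ij A diag[OF ij(1)] by (simp add: complex_eq_iff)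
    next
      case False
      have "Im (A $$ (j,j) + c * A $$ (j,i) + cnj c * A $$ (i,j) + cnj c * c * A $$ (i,i)) = 0" for c
        using q[of "unit_vec n j + c \<cdot>\<^sub>v unit_vec n i"] quadratic_form_two_unit_vecs[OF A ij(2,1)] False by simp
      from this[of 1] this[of \<i>] diag[OF ij(1)] diag[OF ij(2)] show ?thesis
        using ij A by (simp add: complex_eq_iff)
    qed
  qed (use A in auto)
qed

lemma psd_unitary_diag:
  assumes U: "U \<in> carrier_mat n n" and d: "\<And>k. k < n \<Longrightarrow> d k \<ge> 0"
  shows "psd n (U * real_diag_mat n d * adj U)"
proof (rule psd_sum_outer_products[where K="{..<n}" and c=d and f="\<lambda>k i. U $$ (i,k)"])
  fix i j assume ij: "i < n" "j < n"
  show "(U * real_diag_mat n d * adj U) $$ (i,j) = (\<Sum>k\<in>{..<n}. complex_of_real (d k) * U $$ (i,k) * cnj (U $$ (j,k)))"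
    unfolding index_unitary_diag[OF U ij] by (simp add: mult_ac)
qed (use U d in auto)

lemma psd_unitary_diag_nonneg:
  assumes psd: "psd n (U * real_diag_mat n d * adj U)" and U: "unitary n U" and k: "k < n"
  shows "d k \<ge> 0"
proof -
  have Uc: "U \<in> carrier_mat n n" using U by (rule unitary_carrier)
  have v: "col U k \<in> carrier_vec n" using Uc by (intro carrier_vecI) simp
  have "adj U * (U * real_diag_mat n d * adj U) * U = (adj U * U) * real_diag_mat n d * (adj U * U)"
    using Uc by (simp add: assoc_mult_mat[of _ n n _ n _ n])
  hence D: "adj U * (U * real_diag_mat n d * adj U) * U = real_diag_mat n d"
    using U by (simp add: unitary_def)
  have "row (adj U) k = conjugate (col U k)" using Uc k by (intro eq_vecI) auto
  hence "conjugate (col U k) \<bullet> ((U * real_diag_mat n d * adj U) *\<^sub>v col U k) =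
      (adj U * (U * real_diag_mat n d * adj U) * U) $$ (k,k)"
    using Uc k col_mult2[of "U * real_diag_mat n d * adj U" n n U n k]
    by (simp add: assoc_mult_mat[of "adj U" n n _ n _ n])
  also have "\<dots> = complex_of_real (d k)" using D k by (simp add: real_diag_mat_def)
  finally show ?thesis using psd v unfolding psd_def by (metis Re_complex_of_real)
qed

lemma psd_spectral:
  assumes "psd n A"
  shows "\<exists>U d. unitary n U \<and> A = U * real_diag_mat n d * adj U \<and> (\<forall>k<n. d k \<ge> 0)"
proof -
  have A: "A \<in> carrier_mat n n" using assms by (simp add: psd_def)
  obtain U d where U: "unitary n U" and Aeq: "A = U * real_diag_mat n d * adj U"
    using hermitian_spectral[OF A psd_hermitian[OF assms]] by blast
  thus ?thesis using psd_unitary_diag_nonneg[OF assms[unfolded Aeq] U] by blast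
qed

lemma psd_sqrt_exists:
  assumes "psd n A" shows "\<exists>S. psd n S \<and> S * S = A"
proof -
  obtain U d where U: "unitary n U" and Aeq: "A = U * real_diag_mat n d * adj U" and d: "\<forall>k<n. d k \<ge> 0"
    using psd_spectral[OF assms] by blast
  have Uc: "U \<in> carrier_mat n n" using U by (rule unitary_carrier)
  define S where "S = U * real_diag_mat n (\<lambda>k. sqrt (d k)) * adj U"
  have "psd n S" unfolding S_def by (rule psd_unitary_diag[OF Uc]) (simp add: d)
  moreover have "S * S = U * (real_diag_mat n (\<lambda>k. sqrt (d k)) * (adj U * U) * real_diag_mat n (\<lambda>k. sqrt (d k))) * adj U"
    unfolding S_def using Uc by (simp add: assoc_mult_mat[of _ n n _ n _ n])
  moreover have "real_diag_mat n (\<lambda>k. sqrt (d k)) * real_diag_mat n (\<lambda>k. sqrt (d k)) = real_diag_mat n d"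
    unfolding real_diag_mat_mult by (rule eq_matI) (use d in \<open>auto simp: real_diag_mat_def\<close>)
  ultimately show ?thesis using Aeq U by (auto simp: unitary_def)
qed

lemma real_diag_mat_intertwine_sqrt:
  assumes M: "M \<in> carrier_mat n n" and e: "\<forall>k<n. e k \<ge> 0" and f: "\<forall>k<n. f k \<ge> 0"
    and EM: "real_diag_mat n (\<lambda>k. e k * e k) * M = M * real_diag_mat n (\<lambda>k. f k * f k)"
  shows "real_diag_mat n e * M = M * real_diag_mat n f"
proof (rule eq_matI)
  fix i j assume "i < dim_row (M * real_diag_mat n f)" "j < dim_col (M * real_diag_mat n f)"
  hence ij: "i < n" "j < n" using M by auto
  have "complex_of_real (e i * e i) * M $$ (i,j) = M $$ (i,j) * complex_of_real (f j * f j)"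
    using arg_cong[OF EM, of "\<lambda>X. X $$ (i,j)"] M ij
    by (simp add: index_real_diag_mat_mult index_mult_real_diag_mat del: of_real_mult index_mult_mat)
  hence "M $$ (i,j) = 0 \<or> e i * e i = f j * f j"
    by (metis mult.commute mult_cancel_left of_real_eq_iff)
  moreover have "e i * e i = f j * f j \<Longrightarrow> e i = f j"
    using e f ij by (metis abs_of_nonneg real_sqrt_abs2)
  ultimately have "complex_of_real (e i) * M $$ (i,j) = M $$ (i,j) * complex_of_real (f j)"
    by (auto simp: mult.commute)
  thus "(real_diag_mat n e * M) $$ (i,j) = (M * real_diag_mat n f) $$ (i,j)"
    using M ij by (simp add: index_real_diag_mat_mult index_mult_real_diag_mat del: index_mult_mat)
qed (use M in auto)

lemma psd_sqrt_unique:
  assumes B: "psd n B" and C: "psd n C" and BC: "B * B = C * C"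
  shows "B = C"
proof -
  obtain W e where W: "unitary n W" and Beq: "B = W * real_diag_mat n e * adj W" and e: "\<forall>k<n. e k \<ge> 0"
    using psd_spectral[OF B] by blast
  obtain V f where V: "unitary n V" and Ceq: "C = V * real_diag_mat n f * adj V" and f: "\<forall>k<n. f k \<ge> 0"
    using psd_spectral[OF C] by blast
  have Wc: "W \<in> carrier_mat n n" and Vc: "V \<in> carrier_mat n n" using W V by (auto simp: unitary_def)
  note assoc = assoc_mult_mat[of _ n n _ n _ n]
  define M where "M = adj W * V"
  have M: "M \<in> carrier_mat n n" using Wc Vc by (simp add: M_def)
  have "real_diag_mat n (\<lambda>k. e k * e k) * M = adj W * (B * B) * V"
    unfolding Beq M_def real_diag_mat_mult[symmetric] using Wc Vc unitary_adj_mult[OF W]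
    by (simp add: assoc) (simp add: assoc[symmetric])
  also have "\<dots> = adj W * (C * C) * V" using BC by simp
  also have "\<dots> = M * real_diag_mat n (\<lambda>k. f k * f k)"
    unfolding Ceq M_def real_diag_mat_mult[symmetric] using Wc Vc unitary_adj_mult[OF V]
    by (simp add: assoc) (simp add: assoc[symmetric])
  finally have "real_diag_mat n e * M = M * real_diag_mat n f"
    by (rule real_diag_mat_intertwine_sqrt[OF M e f])
  hence "B * V = V * real_diag_mat n f"
    unfolding Beq M_def using Wc Vc unitary_mult_adj[OF W]
    by (simp add: assoc) (simp add: assoc[symmetric])
  hence "B * V * adj V = C" unfolding Ceq by simp
  moreover have "B \<in> carrier_mat n n" using B by (simp add: psd_def)
  hence "B * V * adj V = B" using unitary_mult_adj[OF V] Vc by (simp add: assoc)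
  ultimately show ?thesis by simp
qed

lemma mat_sqrt:
  assumes "psd n A"
  shows "psd n (mat_sqrt n A)" "mat_sqrt n A * mat_sqrt n A = A"
proof -
  have "\<exists>!S. psd n S \<and> S * S = A"
    using psd_sqrt_exists[OF assms] psd_sqrt_unique by blast
  from theI'[OF this] show "psd n (mat_sqrt n A)" "mat_sqrt n A * mat_sqrt n A = A"
    unfolding mat_sqrt_def by auto
qed

section \<open>Linear maps, Choi operators and Kraus representations\<close>

lemma index_pair_less: "(i::nat) < n \<Longrightarrow> r < m \<Longrightarrow> i * m + r < n * m"
proof -
  assume "i < n" "r < m"
  hence "i * m + r < Suc i * m" by simp
  also have "\<dots> \<le> n * m" using \<open>i < n\<close> by (intro mult_right_mono) auto
  finally show ?thesis .
qed

lemma sum_lessThan_mult: "(\<Sum>k<p*q. f k) = (\<Sum>a<p. \<Sum>b<q. f (a*q + b))" for p q :: nat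
proof -
  have "(\<Sum>k<p*q. f k) = (\<Sum>(a,b)\<in>{..<p}\<times>{..<q}. f (a*q + b))"
  proof (rule sum.reindex_bij_witness[where j="\<lambda>k. (k div q, k mod q)" and i="\<lambda>(a,b). a*q + b"])
    fix k assume "k \<in> {..<p*q}"
    thus "(k div q, k mod q) \<in> {..<p} \<times> {..<q}"
      by (auto simp: less_mult_imp_div_less) (metis mod_less_divisor mult_zero_right not_less_zero neq0_conv)
  qed (auto simp: index_pair_less)
  also have "\<dots> = (\<Sum>a<p. \<Sum>b<q. f (a*q + b))" by (simp add: sum.cartesian_product)
  finally show ?thesis .
qed

lemma munit_carrier [simp]: "munit n a b \<in> carrier_mat n n"
  by (simp add: munit_def)

lemma index_munit: "i < n \<Longrightarrow> j < n \<Longrightarrow> munit n x y $$ (i,j) = (if i = x \<and> j = y then 1 else 0)"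
  by (simp add: munit_def)

lemma lin_map_cong:
  assumes "lin_map n m N1" and "\<And>A. A \<in> carrier_mat n n \<Longrightarrow> N2 A = N1 A"
  shows "lin_map n m N2"
  using assms unfolding lin_map_def by simp

lemma lin_map_zero:
  assumes N: "lin_map n m N"
  shows "N (0\<^sub>m n n) = 0\<^sub>m m m"
proof -
  have c: "N (0\<^sub>m n n) \<in> carrier_mat m m" using N by (simp add: lin_map_def)
  have "N (0\<^sub>m n n) = N (0 \<cdot>\<^sub>m 0\<^sub>m n n)" by (simp add: smult_zero_mat)
  also have "\<dots> = 0 \<cdot>\<^sub>m N (0\<^sub>m n n)" using N zero_carrier_mat[of n n] unfolding lin_map_def by blast
  also have "\<dots> = 0\<^sub>m m m" using c by (intro eq_matI) auto
  finally show ?thesis .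
qed

lemma lin_map_expand_partial:
  assumes N: "lin_map n m N" and F: "finite F" "F \<subseteq> {..<n} \<times> {..<n}"
  shows "N (mat n n (\<lambda>(i,j). if (i,j) \<in> F then A $$ (i,j) else 0)) =
         mat m m (\<lambda>(r,s). \<Sum>(i,j)\<in>F. A $$ (i,j) * N (munit n i j) $$ (r,s))"
  using F
proof (induction F rule: finite_induct)
  case empty
  have "mat n n (\<lambda>(i,j). if (i,j) \<in> {} then A $$ (i,j) else 0) = 0\<^sub>m n n"
    "mat m m (\<lambda>(r,s). \<Sum>(i,j)\<in>{}. A $$ (i,j) * N (munit n i j) $$ (r,s)) = 0\<^sub>m m m"
    by (auto intro: eq_matI)
  thus ?case using lin_map_zero[OF N] by (simp only:)
next
  case (insert x F)
  obtain a b where x: "x = (a,b)" by (cases x)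
  have eq: "mat n n (\<lambda>(i,j). if (i,j) \<in> insert x F then A $$ (i,j) else 0) =
        mat n n (\<lambda>(i,j). if (i,j) \<in> F then A $$ (i,j) else 0) + A $$ (a,b) \<cdot>\<^sub>m munit n a b"
    using insert(2) x by (intro eq_matI) (auto simp: munit_def)
  have Nc: "N (munit n a b) \<in> carrier_mat m m" using N by (simp add: lin_map_def)
  have "N (mat n n (\<lambda>(i,j). if (i,j) \<in> insert x F then A $$ (i,j) else 0)) =
        N (mat n n (\<lambda>(i,j). if (i,j) \<in> F then A $$ (i,j) else 0)) + A $$ (a,b) \<cdot>\<^sub>m N (munit n a b)"
    unfolding eq using N by (simp add: lin_map_def)
  also have "\<dots> = mat m m (\<lambda>(r,s). \<Sum>(i,j)\<in>insert x F. A $$ (i,j) * N (munit n i j) $$ (r,s))"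
    unfolding insert.IH[OF subset_trans[OF subset_insertI insert(4)]]
    using insert(1,2) x Nc by (intro eq_matI) (auto simp: add.commute)
  finally show ?case .
qed

lemma lin_map_expand:
  assumes N: "lin_map n m N" and A: "A \<in> carrier_mat n n"
  shows "N A = mat m m (\<lambda>(r,s). \<Sum>i<n. \<Sum>j<n. A $$ (i,j) * N (munit n i j) $$ (r,s))"
proof -
  have "A = mat n n (\<lambda>(i,j). if (i,j) \<in> {..<n} \<times> {..<n} then A $$ (i,j) else 0)"
    using A by (intro eq_matI) auto
  thus ?thesis using lin_map_expand_partial[OF N, of "{..<n} \<times> {..<n}" A]
    by (simp add: sum.cartesian_product)
qed

lemma index_choi:
  "i < n \<Longrightarrow> j < n \<Longrightarrow> r < m \<Longrightarrow> s < m \<Longrightarrow>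
    choi n m N $$ (i * m + r, j * m + s) = N (munit n i j) $$ (r, s)"
  by (simp add: choi_def index_pair_less)

lemma choi_cong: "(\<And>A. A \<in> carrier_mat n n \<Longrightarrow> N1 A = N2 A) \<Longrightarrow> choi n m N1 = choi n m N2"
  unfolding choi_def by (intro eq_matI) (auto simp: less_mult_imp_div_less)

lemma tensor_id_cong:
  "(\<And>A. A \<in> carrier_mat n n \<Longrightarrow> N1 A = N2 A) \<Longrightarrow> tensor_id n m k N1 X = tensor_id n m k N2 X"
  unfolding tensor_id_def by (intro eq_matI) auto

lemma lin_map_choi_inv: "lin_map n m (choi_inv n m T)"
  unfolding lin_map_def
  by (auto intro!: eq_matI simp: choi_inv_def distrib_right sum.distrib sum_distrib_left mult_ac)

lemma choi_inv_choi:
  assumes N: "lin_map n m N" and A: "A \<in> carrier_mat n n"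
  shows "choi_inv n m (choi n m N) A = N A"
  unfolding lin_map_expand[OF N A] choi_inv_def by (intro eq_matI) (auto intro!: sum.cong simp: index_choi)

lemma psd_choi_of_completely_positive:
  assumes N: "lin_map n m N" and cp: "completely_positive n m N"
  shows "psd (n * m) (choi n m N)"
proof -
  define \<Omega> :: "complex mat" where
    "\<Omega> = mat (n*n) (n*n) (\<lambda>(a,b). (if a div n = a mod n then 1 else 0) * (if b div n = b mod n then 1 else 0))"
  have "psd (n*n) \<Omega>"
    by (rule psd_sum_outer_products[where K="{0::nat}" and c="\<lambda>_. 1" and f="\<lambda>_ a. if a div n = a mod n then 1 else 0"])
       (auto simp: \<Omega>_def)
  hence "psd (n * m) (id_tensor n n m N \<Omega>)" using cp unfolding completely_positive_def by blast
  moreover have "id_tensor n n m N \<Omega> = choi n m N"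
  proof (rule eq_matI)
    fix r s assume "r < dim_row (choi n m N)" "s < dim_col (choi n m N)"
    hence rs: "r < n * m" "s < n * m" by (auto simp: choi_def)
    hence rd: "r div m < n" "s div m < n" by (auto simp: less_mult_imp_div_less)
    have "mat n n (\<lambda>(i,j). \<Omega> $$ ((r div m) * n + i, (s div m) * n + j)) = munit n (r div m) (s div m)"
      using rd by (intro eq_matI) (auto simp: \<Omega>_def munit_def index_pair_less)
    thus "id_tensor n n m N \<Omega> $$ (r,s) = choi n m N $$ (r,s)"
      using rs by (simp add: id_tensor_def choi_def)
  qed (auto simp: id_tensor_def choi_def)
  ultimately show ?thesis by simp
qed

definition kraus :: "nat \<Rightarrow> nat \<Rightarrow> (nat \<Rightarrow> complex mat) \<Rightarrow> complex mat \<Rightarrow> complex mat" where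
  "kraus m p K A = mat m m (\<lambda>(r,s). \<Sum>k<p. (K k * A * adj (K k)) $$ (r,s))"

lemma kraus_carrier [simp]: "kraus m p K A \<in> carrier_mat m m"
  by (simp add: kraus_def)

lemma kraus_cong: "(\<And>k. k < p \<Longrightarrow> K1 k = K2 k) \<Longrightarrow> kraus m p K1 X = kraus m p K2 X"
  unfolding kraus_def by (intro eq_matI) auto

lemma lin_map_kraus:
  assumes K: "\<And>k. K k \<in> carrier_mat m n"
  shows "lin_map n m (kraus m p K)"
  unfolding lin_map_def
proof (intro conjI ballI allI)
  fix A B :: "complex mat" assume A: "A \<in> carrier_mat n n" and B: "B \<in> carrier_mat n n"
  have "(K k * (A + B) * adj (K k)) $$ (r,s) = (K k * A * adj (K k)) $$ (r,s) + (K k * B * adj (K k)) $$ (r,s)"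
    if rs: "r < m" "s < m" for k r s
    unfolding index_mult_mult_adj[OF K add_carrier_mat[OF B] rs] index_mult_mult_adj[OF K A rs]
      index_mult_mult_adj[OF K B rs]
    using A B by (simp add: distrib_left distrib_right sum.distrib)
  thus "kraus m p K (A + B) = kraus m p K A + kraus m p K B"
    by (intro eq_matI) (auto simp: kraus_def sum.distrib)
next
  fix c and A :: "complex mat" assume A: "A \<in> carrier_mat n n"
  have "(K k * (c \<cdot>\<^sub>m A) * adj (K k)) $$ (r,s) = c * (K k * A * adj (K k)) $$ (r,s)"
    if rs: "r < m" "s < m" for k r s
    unfolding index_mult_mult_adj[OF K smult_carrier_mat[OF A] rs] index_mult_mult_adj[OF K A rs]
    using A by (simp add: sum_distrib_left mult_ac)
  thus "kraus m p K (c \<cdot>\<^sub>m A) = c \<cdot>\<^sub>m kraus m p K A"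
    by (intro eq_matI) (auto simp: kraus_def sum_distrib_left)
qed simp

lemma index_munit_sandwich:
  assumes K: "K \<in> carrier_mat m n" and xy: "x < n" "y < n" and uv: "u < m" "v < m"
  shows "(K * munit n x y * adj K) $$ (u,v) = K $$ (u,x) * cnj (K $$ (v,y))"
proof -
  have "(K * munit n x y * adj K) $$ (u,v) =
      (\<Sum>i<n. \<Sum>j<n. if i = x then if j = y then K $$ (u,x) * cnj (K $$ (v,y)) else 0 else 0)"
    unfolding index_mult_mult_adj[OF K munit_carrier uv] by (intro sum.cong refl) (auto simp: index_munit)
  also have "\<dots> = (\<Sum>i<n. if i = x then K $$ (u,x) * cnj (K $$ (v,y)) else 0)"
    using xy by (intro sum.cong refl) auto
  finally show ?thesis using xy by simp
qed

lemma psd_choi_kraus: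
  assumes K: "\<And>k. K k \<in> carrier_mat m n" and N: "\<forall>A\<in>carrier_mat n n. N A = kraus m p K A"
  shows "psd (n*m) (choi n m N)"
proof (rule psd_sum_outer_products[where K="{..<p}" and c="\<lambda>_. 1" and f="\<lambda>k a. K k $$ (a mod m, a div m)"])
  fix a b assume ab: "a < n*m" "b < n*m"
  hence d: "a div m < n" "b div m < n" "a mod m < m" "b mod m < m"
    by (auto simp: less_mult_imp_div_less) (metis mod_less_divisor mult_zero_right not_less_zero neq0_conv)+
  have "choi n m N $$ (a,b) = (\<Sum>k<p. (K k * munit n (a div m) (b div m) * adj (K k)) $$ (a mod m, b mod m))"
    using ab N d by (simp add: choi_def kraus_def)
  thus "choi n m N $$ (a,b) = (\<Sum>k\<in>{..<p}. complex_of_real 1 * K k $$ (a mod m, a div m) * cnj (K k $$ (b mod m, b div m)))"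
    by (simp add: index_munit_sandwich[OF K d(1,2) d(3,4)])
qed (auto simp: choi_def)

lemma mult_kraus_mult_adj:
  assumes A: "A \<in> carrier_mat m m'" and K: "\<And>k. K k \<in> carrier_mat m' n" and Y: "Y \<in> carrier_mat n n"
  shows "A * kraus m' p K Y * adj A = kraus m p (\<lambda>k. A * K k) Y"
proof (rule eq_matI)
  fix r s assume "r < dim_row (kraus m p (\<lambda>k. A * K k) Y)" "s < dim_col (kraus m p (\<lambda>k. A * K k) Y)"
  hence rs: "r < m" "s < m" by (auto simp: kraus_def)
  define X where "X k = K k * Y * adj (K k)" for k
  have Xc: "X k \<in> carrier_mat m' m'" for k unfolding X_def using K[of k] Y by (metis adj_carrier mult_carrier_mat)
  have "(A * kraus m' p K Y * adj A) $$ (r,s) = (\<Sum>u<m'. \<Sum>v<m'. \<Sum>k<p. A $$ (r,u) * X k $$ (u,v) * cnj (A $$ (s,v)))"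
    unfolding index_mult_mult_adj[OF A kraus_carrier rs]
    by (intro sum.cong refl) (simp add: kraus_def X_def sum_distrib_left sum_distrib_right)
  also have "\<dots> = (\<Sum>k<p. \<Sum>u<m'. \<Sum>v<m'. A $$ (r,u) * X k $$ (u,v) * cnj (A $$ (s,v)))"
    by (subst sum.swap) (rule sum.cong[OF refl], rule sum.swap)
  also have "\<dots> = (\<Sum>k<p. (A * X k * adj A) $$ (r,s))"
    by (intro sum.cong refl) (rule index_mult_mult_adj[OF A Xc rs, symmetric])
  also have "\<dots> = (\<Sum>k<p. ((A * K k) * Y * adj (A * K k)) $$ (r,s))"
  proof (intro sum.cong refl)
    fix k
    have Kk: "K k \<in> carrier_mat m' n" by (rule K)
    have "A * X k * adj A = A * (K k * Y) * adj (K k) * adj A"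
      unfolding X_def using A Kk Y by (simp add: assoc_mult_mat[OF A mult_carrier_mat[OF Kk Y] adj_carrier[OF Kk]])
    also have "\<dots> = A * K k * Y * adj (K k) * adj A" by (simp add: assoc_mult_mat[OF A Kk Y])
    also have "\<dots> = (A * K k) * Y * (adj (K k) * adj A)"
      by (rule assoc_mult_mat[OF mult_carrier_mat[OF mult_carrier_mat[OF A Kk] Y] adj_carrier[OF Kk] adj_carrier[OF A]])
    finally show "(A * X k * adj A) $$ (r,s) = ((A * K k) * Y * adj (A * K k)) $$ (r,s)"
      by (simp add: adj_mult[OF A Kk])
  qed
  finally show "(A * kraus m' p K Y * adj A) $$ (r,s) = kraus m p (\<lambda>k. A * K k) Y $$ (r,s)"
    using rs by (simp add: kraus_def)
qed (use A in \<open>auto simp: kraus_def\<close>)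

lemma kraus_mult_mult_adj:
  assumes B: "B \<in> carrier_mat n' n" and X: "X \<in> carrier_mat n n" and K: "\<And>k. K k \<in> carrier_mat m n'"
  shows "kraus m p K (B * X * adj B) = kraus m p (\<lambda>k. K k * B) X"
proof -
  have "K k * (B * X * adj B) * adj (K k) = (K k * B) * X * adj (K k * B)" for k
  proof -
    have Kk: "K k \<in> carrier_mat m n'" by (rule K)
    have "K k * (B * X * adj B) * adj (K k) = K k * B * X * adj B * adj (K k)"
      using Kk B X by (simp add: assoc_mult_mat[OF Kk mult_carrier_mat[OF B X] adj_carrier[OF B]]
          assoc_mult_mat[OF Kk B X])
    also have "\<dots> = (K k * B) * X * (adj B * adj (K k))"
      by (rule assoc_mult_mat[OF mult_carrier_mat[OF mult_carrier_mat[OF Kk B] X] adj_carrier[OF B] adj_carrier[OF Kk]])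
    finally show ?thesis by (simp add: adj_mult[OF Kk B])
  qed
  thus ?thesis unfolding kraus_def by simp
qed

lemma kraus_zero_tail:
  assumes "p \<le> d" and "\<And>k. p \<le> k \<Longrightarrow> K k = 0\<^sub>m m n" and "X \<in> carrier_mat n n"
  shows "kraus m d K X = kraus m p K X"
proof -
  have "(\<Sum>k<d. (K k * X * adj (K k)) $$ (r,s)) = (\<Sum>k<p. (K k * X * adj (K k)) $$ (r,s))"
    if "r < m" "s < m" for r s
    using assms that by (intro sum.mono_neutral_right) (auto simp: index_mult_mult_adj)
  thus ?thesis unfolding kraus_def by (intro eq_matI) auto
qed

lemma kron_one_one: "kron (1\<^sub>m n) (1\<^sub>m d) = 1\<^sub>m (n*d)"
proof (rule eq_matI)
  fix i j assume "i < dim_row (1\<^sub>m (n*d))" "j < dim_col (1\<^sub>m (n*d))"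
  hence ij: "i < n*d" "j < n*d" by auto
  hence "i div d < n" "j div d < n" "d > 0" by (auto simp: less_mult_imp_div_less intro: gr0I)
  moreover have "(i div d = j div d \<and> i mod d = j mod d) = (i = j)" by (metis div_mult_mod_eq)
  ultimately show "kron (1\<^sub>m n) (1\<^sub>m d) $$ (i,j) = 1\<^sub>m (n*d) $$ (i,j)"
    using ij by (auto simp: kron_def)
qed (auto simp: kron_def)

text \<open>The operator \<open>\<Sum>\<^sub>k B\<^sub>k \<otimes> \<langle>k|\<close> from \<open>\<complex>\<^sup>n \<otimes> \<complex>\<^sup>d\<close> to \<open>\<complex>\<^sup>m\<close>,
  which maps \<open>x \<otimes> |k\<rangle>\<close> to \<open>B\<^sub>k x\<close>.\<close>

definition stack_blocks :: "nat \<Rightarrow> nat \<Rightarrow> nat \<Rightarrow> (nat \<Rightarrow> complex mat) \<Rightarrow> complex mat" where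
  "stack_blocks m n d B = mat m (n * d) (\<lambda>(a,c). B (c mod d) $$ (a, c div d))"

lemma stack_blocks_carrier [simp]: "stack_blocks m n d B \<in> carrier_mat m (n * d)"
  by (simp add: stack_blocks_def)

lemma stack_blocks_kron_one:
  assumes B: "\<And>k. B k \<in> carrier_mat m n" and X: "X \<in> carrier_mat n n"
  shows "stack_blocks m n d B * kron X (1\<^sub>m d) * adj (stack_blocks m n d B) = kraus m d B X"
proof (rule eq_matI)
  fix r s assume "r < dim_row (kraus m d B X)" "s < dim_col (kraus m d B X)"
  hence rs: "r < m" "s < m" by (auto simp: kraus_def)
  let ?V = "stack_blocks m n d B"
  have V: "\<And>i k. i < n \<Longrightarrow> k < d \<Longrightarrow> ?V $$ (r, i*d+k) = B k $$ (r,i) \<and> ?V $$ (s, i*d+k) = B k $$ (s,i)"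
    using rs by (simp add: stack_blocks_def index_pair_less)
  have Kc: "kron X (1\<^sub>m d) \<in> carrier_mat (n*d) (n*d)" using X by (simp add: kron_def)
  have kr: "kron X (1\<^sub>m d) $$ (i*d+k, j*d+l) = (if l = k then X $$ (i,j) else 0)"
    if "i < n" "j < n" "k < d" "l < d" for i j k l
    using that X by (simp add: kron_def index_pair_less)
  have "(?V * kron X (1\<^sub>m d) * adj ?V) $$ (r,s) =
      (\<Sum>i<n. \<Sum>k<d. \<Sum>j<n. \<Sum>l<d. ?V $$ (r,i*d+k) * kron X (1\<^sub>m d) $$ (i*d+k,j*d+l) * cnj (?V $$ (s,j*d+l)))"
    unfolding index_mult_mult_adj[OF stack_blocks_carrier Kc rs] sum_lessThan_mult ..
  also have "\<dots> = (\<Sum>i<n. \<Sum>k<d. \<Sum>j<n. B k $$ (r,i) * X $$ (i,j) * cnj (B k $$ (s,j)))"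
    by (intro sum.cong refl) (simp add: kr V if_distrib if_distribR cong: if_cong)
  also have "\<dots> = (\<Sum>k<d. \<Sum>i<n. \<Sum>j<n. B k $$ (r,i) * X $$ (i,j) * cnj (B k $$ (s,j)))"
    by (rule sum.swap)
  also have "\<dots> = kraus m d B X $$ (r,s)"
    using rs by (simp add: kraus_def index_mult_mult_adj[OF B X rs])
  finally show "(?V * kron X (1\<^sub>m d) * adj ?V) $$ (r,s) = kraus m d B X $$ (r,s)" .
qed (auto simp: kraus_def stack_blocks_def)

lemma ptrace2_kraus:
  assumes K: "\<And>k. K k \<in> carrier_mat (a*b) n" and X: "X \<in> carrier_mat n n"
  shows "ptrace2 a b (kraus (a*b) p K X) =
    kraus a (p*b) (\<lambda>k'. mat a n (\<lambda>(z,i). K (k' div b) $$ (z*b + k' mod b, i))) X"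
proof (rule eq_matI)
  define K' where "K' k' = mat a n (\<lambda>(z,i). K (k' div b) $$ (z*b + k' mod b, i))" for k'
  fix z z' assume "z < dim_row (kraus a (p*b) K' X)" "z' < dim_col (kraus a (p*b) K' X)"
  hence zz: "z < a" "z' < a" by (auto simp: kraus_def)
  have K'c: "K' k' \<in> carrier_mat a n" for k' by (simp add: K'_def)
  have "ptrace2 a b (kraus (a*b) p K X) $$ (z,z') =
      (\<Sum>\<alpha><b. \<Sum>k<p. \<Sum>i<n. \<Sum>j<n. K k $$ (z*b+\<alpha>, i) * X $$ (i,j) * cnj (K k $$ (z'*b+\<alpha>, j)))"
    using zz by (simp add: ptrace2_def kraus_def index_pair_less index_mult_mult_adj[OF K X])
  also have "\<dots> = (\<Sum>k<p. \<Sum>\<alpha><b. \<Sum>i<n. \<Sum>j<n. K k $$ (z*b+\<alpha>, i) * X $$ (i,j) * cnj (K k $$ (z'*b+\<alpha>, j)))"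
    by (rule sum.swap)
  also have "\<dots> = (\<Sum>k'<p*b. (K' k' * X * adj (K' k')) $$ (z,z'))"
    unfolding sum_lessThan_mult using zz
    by (intro sum.cong refl) (subst index_mult_mult_adj[OF K'c X zz], simp add: K'_def)
  also have "\<dots> = kraus a (p*b) K' X $$ (z,z')" using zz by (simp add: kraus_def)
  finally show "ptrace2 a b (kraus (a*b) p K X) $$ (z,z') = kraus a (p*b) K' X $$ (z,z')" .
qed (auto simp: kraus_def ptrace2_def)

lemma unitary_diag_mult_col:
  assumes U: "unitary N U" and k: "k < N"
  shows "(U * real_diag_mat N d * adj U) *\<^sub>v col U k = complex_of_real (d k) \<cdot>\<^sub>v col U k"
proof -
  have Uc: "U \<in> carrier_mat N N" using U by (rule unitary_carrier)
  have J: "U * real_diag_mat N d * adj U \<in> carrier_mat N N" using Uc by simp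
  have "(U * real_diag_mat N d * adj U) * U = U * real_diag_mat N d"
    using Uc unitary_adj_mult[OF U] by (simp add: assoc_mult_mat[of _ N N _ N _ N])
  hence "(U * real_diag_mat N d * adj U) *\<^sub>v col U k = col (U * real_diag_mat N d) k"
    using col_mult2[OF J Uc k] by simp
  also have "\<dots> = complex_of_real (d k) \<cdot>\<^sub>v col U k"
  proof (rule eq_vecI)
    fix i assume "i < dim_vec (complex_of_real (d k) \<cdot>\<^sub>v col U k)"
    hence i: "i < N" using Uc by simp
    show "col (U * real_diag_mat N d) k $ i = (complex_of_real (d k) \<cdot>\<^sub>v col U k) $ i"
      using Uc i k by (simp add: index_mult_real_diag_mat[OF Uc i k] mult.commute del: index_mult_mat(1))
  qed (use Uc in simp)
  finally show ?thesis .
qed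

lemma unitary_col_inner:
  assumes U: "unitary N U" and kl: "k < N" "l < N"
  shows "(\<Sum>i<N. cnj (U $$ (i,k)) * col U l $ i) = (if k = l then 1 else 0)"
proof -
  have "(\<Sum>i<N. cnj (U $$ (i,k)) * col U l $ i) = (\<Sum>i<N. cnj (U $$ (i,k)) * U $$ (i,l))"
    using unitary_carrier[OF U] kl by (intro sum.cong) auto
  thus ?thesis using unitary_cols_orthonormal[OF U kl] by simp
qed

lemma inj_on_unitary_cols:
  assumes U: "unitary N U"
  shows "inj_on (col U) {..<N}"
proof
  fix k l assume kl: "k \<in> {..<N}" "l \<in> {..<N}" and eq: "col U k = col U l"
  have "(if k = l then 1 else 0) = (1::complex)"
    using unitary_col_inner[OF U, of k l] unitary_col_inner[OF U, of k k] kl eq by simp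
  thus "k = l" by (simp split: if_splits)
qed

lemma unitary_cols_lin_indpt:
  assumes U: "unitary N U" and S: "S \<subseteq> {..<N}"
  shows "\<not> module.lin_dep class_ring (module_vec TYPE(complex) N) (col U ` S)"
proof
  interpret vec_space "TYPE(complex)" N .
  assume "lin_dep (col U ` S)"
  then obtain A a v where A: "finite A" "A \<subseteq> col U ` S" and comb: "lincomb a A = 0\<^sub>v N"
    and v: "v \<in> A" and av: "a v \<noteq> 0"
    unfolding lin_dep_def by auto
  obtain k where k: "k \<in> S" and vk: "v = col U k" using v A by auto
  have "col U l \<in> carrier_vec N" for l using unitary_carrier[OF U] by (intro carrier_vecI) simp
  hence Ac: "A \<subseteq> carrier_vec N" using A(2) by blast
  have "0 = (\<Sum>i<N. cnj (U $$ (i,k)) * lincomb a A $ i)" unfolding comb by simp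
  also have "\<dots> = (\<Sum>i<N. \<Sum>x\<in>A. a x * (cnj (U $$ (i,k)) * x $ i))"
    by (intro sum.cong refl) (simp add: lincomb_index[OF _ Ac] sum_distrib_left mult_ac)
  also have "\<dots> = (\<Sum>x\<in>A. a x * (\<Sum>i<N. cnj (U $$ (i,k)) * x $ i))"
    by (subst sum.swap) (simp add: sum_distrib_left)
  also have "\<dots> = (\<Sum>x\<in>A. if x = v then a v else 0)"
  proof (intro sum.cong refl)
    fix x assume "x \<in> A"
    then obtain l where l: "l \<in> S" and xl: "x = col U l" using A by auto
    have kl: "k < N" "l < N" using k l S by auto
    hence "x = v \<longleftrightarrow> k = l" using inj_on_unitary_cols[OF U] unfolding vk xl inj_on_def by auto
    thus "a x * (\<Sum>i<N. cnj (U $$ (i,k)) * x $ i) = (if x = v then a v else 0)"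
      using unitary_col_inner[OF U kl] unfolding xl by auto
  qed
  also have "\<dots> = a v" using v A by simp
  finally show False using av by simp
qed

lemma card_nonzero_eigenvalues_le_rank:
  assumes U: "unitary N U"
  shows "card {k. k < N \<and> d k \<noteq> 0} \<le> vec_space.rank N (U * real_diag_mat N d * adj U)"
proof -
  interpret vec_space "TYPE(complex)" N .
  define J where "J = U * real_diag_mat N d * adj U"
  define S where "S = {k. k < N \<and> d k \<noteq> 0}"
  have Uc: "U \<in> carrier_mat N N" using U by (rule unitary_carrier)
  have J: "J \<in> carrier_mat N N" using Uc by (simp add: J_def)
  have colsJ: "set (cols J) \<subseteq> carrier_vec N" using J by (auto simp: cols_def)
  have span: "col U ` S \<subseteq> span (set (cols J))"
  proof
    fix x assume "x \<in> col U ` S"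
    then obtain k where k: "k < N" "d k \<noteq> 0" and x: "x = col U k" by (auto simp: S_def)
    have colc: "col U k \<in> carrier_vec N" using Uc by (intro carrier_vecI) simp
    have "x = J *\<^sub>v (complex_of_real (1 / d k) \<cdot>\<^sub>v col U k)"
      using J colc k unitary_diag_mult_col[OF U k(1), of d]
      by (simp add: J_def x mult_mat_vec smult_smult_assoc)
    moreover have "complex_of_real (1 / d k) \<cdot>\<^sub>v col U k \<in> carrier_vec N" using colc by simp
    ultimately have "x \<in> col_space J" unfolding col_space_eq[OF J] using J by auto
    thus "x \<in> span (set (cols J))" unfolding col_space_def .
  qed
  have S: "S \<subseteq> {..<N}" by (auto simp: S_def)
  have li: "LinearCombinations.module.lin_indpt class_ring (span_vs (set (cols J))) (col U ` S)"
    using span_li_not_depend(2)[OF span span_is_submodule[OF colsJ]] unitary_cols_lin_indpt[OF U S]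
    by simp
  have "card (col U ` S) \<le> vectorspace.dim class_ring (span_vs (set (cols J)))"
    using span_is_subspace[OF colsJ, THEN subspace_is_vs] fin_dim_span_cols[OF J] span li
    by (intro vectorspace.li_le_dim(2)) simp_all
  moreover have "card (col U ` S) = card S"
    using inj_on_subset[OF inj_on_unitary_cols[OF U] S] by (simp add: card_image)
  ultimately show ?thesis unfolding rank_def J_def S_def by simp
qed

lemma kraus_of_choi_spectral:
  assumes N: "lin_map n m N" and U: "U \<in> carrier_mat (n*m) (n*m)"
    and J: "choi n m N = U * real_diag_mat (n*m) d * adj U" and d: "\<forall>k<n*m. d k \<ge> 0"
    and A: "A \<in> carrier_mat n n"
  shows "N A = kraus m (n*m) (\<lambda>k. mat m n (\<lambda>(r,i). complex_of_real (sqrt (d k)) * U $$ (i*m + r, k))) A"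
    (is "_ = kraus m (n*m) ?K A")
proof (rule eq_matI)
  fix r s assume "r < dim_row (kraus m (n*m) ?K A)" "s < dim_col (kraus m (n*m) ?K A)"
  hence rs: "r < m" "s < m" by (auto simp: kraus_def)
  have "kraus m (n*m) ?K A $$ (r,s) =
      (\<Sum>k<n*m. \<Sum>i<n. \<Sum>l<n. complex_of_real (d k) * U $$ (i*m + r, k) * A $$ (i,l) * cnj (U $$ (l*m + s, k)))"
    unfolding kraus_def index_mat(1)[OF rs] prod.simps
  proof (intro sum.cong refl)
    fix k assume "k \<in> {..<n*m}"
    hence sq: "complex_of_real (sqrt (d k)) * cnj (complex_of_real (sqrt (d k))) = complex_of_real (d k)"
      using d by (simp flip: of_real_mult)
    have Kc: "?K k \<in> carrier_mat m n" by simp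
    show "(?K k * A * adj (?K k)) $$ (r,s) =
        (\<Sum>i<n. \<Sum>l<n. complex_of_real (d k) * U $$ (i*m + r, k) * A $$ (i,l) * cnj (U $$ (l*m + s, k)))"
      unfolding index_mult_mult_adj[OF Kc A rs] using rs by (intro sum.cong refl) (simp add: sq[symmetric] mult_ac)
  qed
  also have "\<dots> = (\<Sum>i<n. \<Sum>l<n. A $$ (i,l) * (\<Sum>k<n*m. U $$ (i*m + r, k) * complex_of_real (d k) * cnj (U $$ (l*m + s, k))))"
    by (subst sum.swap, rule sum.cong[OF refl], subst sum.swap) (simp add: sum_distrib_left mult_ac)
  also have "\<dots> = (\<Sum>i<n. \<Sum>l<n. A $$ (i,l) * N (munit n i l) $$ (r,s))"
    using rs by (intro sum.cong refl) (simp add: index_unitary_diag[OF U, symmetric] index_pair_less flip: J index_choi)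
  also have "\<dots> = N A $$ (r,s)" unfolding lin_map_expand[OF N A] using rs by simp
  finally show "N A $$ (r,s) = kraus m (n*m) ?K A $$ (r,s)" ..
qed (use N A in \<open>auto simp: lin_map_def kraus_def\<close>)

lemma kraus_reindex_nonzero:
  assumes S: "S \<subseteq> {..<P}" and Z: "\<And>k. k < P \<Longrightarrow> k \<notin> S \<Longrightarrow> K k = 0\<^sub>m m n"
    and g: "bij_betw g {..<card S} S" and A: "A \<in> carrier_mat n n"
  shows "kraus m P K A = kraus m (card S) (K \<circ> g) A"
proof -
  have "(\<Sum>k<P. (K k * A * adj (K k)) $$ (r,s)) = (\<Sum>j<card S. (K (g j) * A * adj (K (g j))) $$ (r,s))"
    if rs: "r < m" "s < m" for r s
  proof -
    have "(\<Sum>k<P. (K k * A * adj (K k)) $$ (r,s)) = (\<Sum>k\<in>S. (K k * A * adj (K k)) $$ (r,s))"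
      using S Z A rs by (intro sum.mono_neutral_right) (auto simp: index_mult_mult_adj)
    also have "\<dots> = (\<Sum>j<card S. (K (g j) * A * adj (K (g j))) $$ (r,s))"
      by (rule sum.reindex_bij_betw[OF g, symmetric])
    finally show ?thesis .
  qed
  thus ?thesis unfolding kraus_def by (intro eq_matI) auto
qed

theorem kraus_of_choi:
  assumes N: "lin_map n m N" and J: "psd (n*m) (choi n m N)"
  shows "\<exists>p K. (\<forall>k. K k \<in> carrier_mat m n) \<and> (\<forall>A\<in>carrier_mat n n. N A = kraus m p K A) \<and>
     p \<le> vec_space.rank (n*m) (choi n m N)"
proof -
  obtain U d where U: "unitary (n*m) U" and Jeq: "choi n m N = U * real_diag_mat (n*m) d * adj U"
    and d: "\<forall>k<n*m. d k \<ge> 0"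
    using psd_spectral[OF J] by blast
  define K where "K k = mat m n (\<lambda>(r,i). complex_of_real (sqrt (d k)) * U $$ (i*m + r, k))" for k
  define S where "S = {k. k < n*m \<and> d k \<noteq> 0}"
  obtain g where g: "bij_betw g {..<card S} S"
    using ex_bij_betw_nat_finite[of S] unfolding atLeast0LessThan S_def by auto
  have "N A = kraus m (card S) (K \<circ> g) A" if A: "A \<in> carrier_mat n n" for A
    unfolding kraus_of_choi_spectral[OF N unitary_carrier[OF U] Jeq d A, folded K_def]
    using A g by (intro kraus_reindex_nonzero) (auto simp: S_def K_def intro!: eq_matI)
  moreover have "card S \<le> vec_space.rank (n*m) (choi n m N)"
    unfolding S_def Jeq by (rule card_nonzero_eigenvalues_le_rank[OF U])
  moreover have "(K \<circ> g) k \<in> carrier_mat m n" for k by (simp add: K_def)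
  ultimately show ?thesis by blast
qed

lemma kraus_of_completely_positive:
  assumes "lin_map n m N" "completely_positive n m N"
  shows "\<exists>p K. (\<forall>k. K k \<in> carrier_mat m n) \<and> (\<forall>A\<in>carrier_mat n n. N A = kraus m p K A)"
  using kraus_of_choi[OF assms(1) psd_choi_of_completely_positive[OF assms]] by blast

section \<open>The Choi map of a superchannel\<close>

lemma sum_reindex_blocks:
  fixes h :: "nat \<Rightarrow> nat \<Rightarrow> nat \<Rightarrow> nat \<Rightarrow> nat \<Rightarrow> nat \<Rightarrow> complex" and X Z M :: nat
  shows "(\<Sum>p<Z*M. \<Sum>q<Z*M. \<Sum>i<X. \<Sum>j<X. h i (p div M) (p mod M) j (q div M) (q mod M)) =
         (\<Sum>c<X*Z. \<Sum>d<X*Z. \<Sum>\<mu><M. \<Sum>\<nu><M. h (c div Z) (c mod Z) \<mu> (d div Z) (d mod Z) \<nu>)"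
proof -
  define g where "g = (\<lambda>(p,q,i,j). h i (p div M) (p mod M) j (q div M) (q mod M))"
  define g' where "g' = (\<lambda>(c,d,\<mu>,\<nu>). h (c div Z) (c mod Z) \<mu> (d div Z) (d mod Z) \<nu>)"
  have L: "(\<Sum>p<Z*M. \<Sum>q<Z*M. \<Sum>i<X. \<Sum>j<X. h i (p div M) (p mod M) j (q div M) (q mod M)) =
     sum g ({..<Z*M} \<times> {..<Z*M} \<times> {..<X} \<times> {..<X})"
    unfolding g_def by (simp add: sum.cartesian_product)
  have R: "(\<Sum>c<X*Z. \<Sum>d<X*Z. \<Sum>\<mu><M. \<Sum>\<nu><M. h (c div Z) (c mod Z) \<mu> (d div Z) (d mod Z) \<nu>) =
     sum g' ({..<X*Z} \<times> {..<X*Z} \<times> {..<M} \<times> {..<M})"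
    unfolding g'_def by (simp add: sum.cartesian_product)
  have "sum g ({..<Z*M} \<times> {..<Z*M} \<times> {..<X} \<times> {..<X}) = sum g' ({..<X*Z} \<times> {..<X*Z} \<times> {..<M} \<times> {..<M})"
  proof (rule sum.reindex_bij_witness[where j="\<lambda>(p,q,i,j). (i*Z + p div M, j*Z + q div M, p mod M, q mod M)"
        and i="\<lambda>(c,d,\<mu>,\<nu>). ((c mod Z)*M + \<mu>, (d mod Z)*M + \<nu>, c div Z, d div Z)"])
    fix a assume a: "a \<in> {..<Z*M} \<times> {..<Z*M} \<times> {..<X} \<times> {..<X}"
    then obtain p q i j where aa: "a = (p,q,i,j)" "p < Z*M" "q < Z*M" "i < X" "j < X" by auto
    have M0: "M > 0" using aa by (cases M) auto
    have pd: "p div M < Z" "q div M < Z" using aa by (auto simp: less_mult_imp_div_less)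
    show "(case (case a of (p,q,i,j) \<Rightarrow> (i*Z + p div M, j*Z + q div M, p mod M, q mod M)) of
          (c,d,\<mu>,\<nu>) \<Rightarrow> ((c mod Z)*M + \<mu>, (d mod Z)*M + \<nu>, c div Z, d div Z)) = a"
      using aa pd by simp
    show "(case a of (p,q,i,j) \<Rightarrow> (i*Z + p div M, j*Z + q div M, p mod M, q mod M)) \<in> {..<X*Z} \<times> {..<X*Z} \<times> {..<M} \<times> {..<M}"
      using aa pd M0 index_pair_less by auto
    show "g' (case a of (p,q,i,j) \<Rightarrow> (i*Z + p div M, j*Z + q div M, p mod M, q mod M)) = g a"
      using aa pd unfolding g_def g'_def by simp
  next
    fix b assume b: "b \<in> {..<X*Z} \<times> {..<X*Z} \<times> {..<M} \<times> {..<M}"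
    then obtain c d \<mu> \<nu> where bb: "b = (c,d,\<mu>,\<nu>)" "c < X*Z" "d < X*Z" "\<mu> < M" "\<nu> < M" by auto
    have Z0: "Z > 0" using bb by (cases Z) auto
    have cd: "c mod Z < Z" "d mod Z < Z" "c div Z < X" "d div Z < X" using bb Z0 by (auto simp: less_mult_imp_div_less)
    show "(case (case b of (c,d,\<mu>,\<nu>) \<Rightarrow> ((c mod Z)*M + \<mu>, (d mod Z)*M + \<nu>, c div Z, d div Z)) of
          (p,q,i,j) \<Rightarrow> (i*Z + p div M, j*Z + q div M, p mod M, q mod M)) = b"
      using bb by simp
    show "(case b of (c,d,\<mu>,\<nu>) \<Rightarrow> ((c mod Z)*M + \<mu>, (d mod Z)*M + \<nu>, c div Z, d div Z)) \<in> {..<Z*M} \<times> {..<Z*M} \<times> {..<X} \<times> {..<X}"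
      using bb cd index_pair_less by auto
  qed
  thus ?thesis using L R by simp
qed

text \<open>The Kraus operator of the Choi map of \<open>N \<mapsto> F (N \<otimes> id\<^sub>M) (E \<cdot> E\<^sup>\<dagger>) F\<^sup>\<dagger>\<close>:
  \<open>\<langle>x,o| L |i,z\<rangle> = \<Sum>\<^sub>\<mu> \<langle>o|F|z,\<mu>\<rangle> \<langle>i,\<mu>|E|x\<rangle>\<close>.\<close>

definition supermap_kraus_op ::
    "nat \<Rightarrow> nat \<Rightarrow> nat \<Rightarrow> nat \<Rightarrow> nat \<Rightarrow> complex mat \<Rightarrow> complex mat \<Rightarrow> complex mat" where
  "supermap_kraus_op dXo dX dZ dM dZo E F = mat (dXo*dZo) (dX*dZ)
     (\<lambda>(row,c). \<Sum>\<mu><dM. F $$ (row mod dZo, (c mod dZ)*dM + \<mu>) * E $$ ((c div dZ)*dM + \<mu>, row div dZo))"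

lemma supermap_kraus_op_carrier [simp]:
  "supermap_kraus_op dXo dX dZ dM dZo E F \<in> carrier_mat (dXo*dZo) (dX*dZ)"
  by (simp add: supermap_kraus_op_def)

lemma index_supermap_kraus_op_sandwich:
  assumes tau: "\<tau> \<in> carrier_mat (dX*dZ) (dX*dZ)" and xy: "x < dXo" "y < dXo" and o: "o1 < dZo" "o2 < dZo"
  shows "(supermap_kraus_op dXo dX dZ dM dZo E F * \<tau> * adj (supermap_kraus_op dXo dX dZ dM dZo E F))
      $$ (x*dZo + o1, y*dZo + o2) =
    (\<Sum>p<dZ*dM. \<Sum>q<dZ*dM. \<Sum>i<dX. \<Sum>j<dX. F $$ (o1,p) * E $$ (i*dM + p mod dM, x) *
       \<tau> $$ (i*dZ + p div dM, j*dZ + q div dM) * cnj (F $$ (o2,q) * E $$ (j*dM + q mod dM, y)))"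
proof -
  let ?L = "supermap_kraus_op dXo dX dZ dM dZo E F"
  define H where "H i z \<mu> j z' \<nu> = F $$ (o1, z*dM+\<mu>) * E $$ (i*dM+\<mu>, x) * \<tau> $$ (i*dZ+z, j*dZ+z') *
      cnj (F $$ (o2, z'*dM+\<nu>) * E $$ (j*dM+\<nu>, y))" for i z \<mu> j z' \<nu>
  have rc: "x*dZo + o1 < dXo*dZo" "y*dZo + o2 < dXo*dZo" using xy o by (auto intro: index_pair_less)
  have "(?L * \<tau> * adj ?L) $$ (x*dZo + o1, y*dZo + o2) =
      (\<Sum>c<dX*dZ. \<Sum>d<dX*dZ. \<Sum>\<mu><dM. \<Sum>\<nu><dM. H (c div dZ) (c mod dZ) \<mu> (d div dZ) (d mod dZ) \<nu>)"
    unfolding index_mult_mult_adj[OF supermap_kraus_op_carrier tau rc]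
  proof (intro sum.cong refl)
    fix c d assume "c \<in> {..<dX*dZ}" "d \<in> {..<dX*dZ}"
    have "\<tau> $$ (c,d) = \<tau> $$ ((c div dZ)*dZ + c mod dZ, (d div dZ)*dZ + d mod dZ)" by simp
    thus "?L $$ (x*dZo + o1, c) * \<tau> $$ (c,d) * cnj (?L $$ (y*dZo + o2, d)) =
        (\<Sum>\<mu><dM. \<Sum>\<nu><dM. H (c div dZ) (c mod dZ) \<mu> (d div dZ) (d mod dZ) \<nu>)"
      unfolding H_def using rc \<open>c \<in> _\<close> \<open>d \<in> _\<close> o
      by (simp add: supermap_kraus_op_def cnj_sum sum_distrib_left sum_distrib_right mult_ac)
  qed
  also have "\<dots> = (\<Sum>p<dZ*dM. \<Sum>q<dZ*dM. \<Sum>i<dX. \<Sum>j<dX. H i (p div dM) (p mod dM) j (q div dM) (q mod dM))"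
    by (rule sum_reindex_blocks[symmetric])
  finally show ?thesis by (simp add: H_def)
qed

lemma index_tensor_id_choi_inv_kraus_munit:
  assumes E: "\<And>a. E a \<in> carrier_mat (dX*dM) dXo" and xy: "x < dXo" "y < dXo"
    and pq: "p < dZ*dM" "q < dZ*dM"
  shows "tensor_id dX dZ dM (choi_inv dX dZ \<tau>) (kraus (dX*dM) pa E (munit dXo x y)) $$ (p,q) =
    (\<Sum>i<dX. \<Sum>j<dX. (\<Sum>a<pa. E a $$ (i*dM + p mod dM, x) * cnj (E a $$ (j*dM + q mod dM, y))) *
       \<tau> $$ (i*dZ + p div dM, j*dZ + q div dM))"
proof -
  have "dM > 0" using pq by (cases dM) auto
  have "tensor_id dX dZ dM (choi_inv dX dZ \<tau>) (kraus (dX*dM) pa E (munit dXo x y)) $$ (p,q) =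
      (\<Sum>i<dX. \<Sum>j<dX. kraus (dX*dM) pa E (munit dXo x y) $$ (i*dM + p mod dM, j*dM + q mod dM) *
         \<tau> $$ (i*dZ + p div dM, j*dZ + q div dM))"
    using pq by (simp add: tensor_id_def choi_inv_def less_mult_imp_div_less)
  also have "\<dots> = (\<Sum>i<dX. \<Sum>j<dX. (\<Sum>a<pa. E a $$ (i*dM + p mod dM, x) * cnj (E a $$ (j*dM + q mod dM, y))) *
       \<tau> $$ (i*dZ + p div dM, j*dZ + q div dM))"
    using xy \<open>dM > 0\<close> by (intro sum.cong refl) (simp add: kraus_def index_munit_sandwich[OF E] index_pair_less)
  finally show ?thesis .
qed

lemma choi_supermap_kraus:
  fixes E F :: "nat \<Rightarrow> complex mat"
  assumes E: "\<And>a. E a \<in> carrier_mat (dX*dM) dXo" and F: "\<And>b. F b \<in> carrier_mat dZo (dZ*dM)"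
    and Epre: "\<forall>A\<in>carrier_mat dXo dXo. Epre A = kraus (dX*dM) pa E A"
    and Epost: "\<forall>B\<in>carrier_mat (dZ*dM) (dZ*dM). Epost B = kraus dZo pb F B"
    and R: "\<forall>N. lin_map dX dZ N \<longrightarrow> (\<forall>A\<in>carrier_mat dXo dXo. R N A = Epost (tensor_id dX dZ dM N (Epre A)))"
    and tau: "\<tau> \<in> carrier_mat (dX*dZ) (dX*dZ)"
  shows "choi_supermap dX dZ dXo dZo R \<tau> =
    kraus (dXo*dZo) (pa*pb) (\<lambda>k. supermap_kraus_op dXo dX dZ dM dZo (E (k div pb)) (F (k mod pb))) \<tau>"
proof (rule eq_matI)
  let ?L = "\<lambda>a b. supermap_kraus_op dXo dX dZ dM dZo (E a) (F b)"
  fix row col assume "row < dim_row (kraus (dXo*dZo) (pa*pb) (\<lambda>k. ?L (k div pb) (k mod pb)) \<tau>)"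
    "col < dim_col (kraus (dXo*dZo) (pa*pb) (\<lambda>k. ?L (k div pb) (k mod pb)) \<tau>)"
  hence rc: "row < dXo*dZo" "col < dXo*dZo" by (auto simp: kraus_def)
  define x o1 y o2 where "x = row div dZo" "o1 = row mod dZo" "y = col div dZo" "o2 = col mod dZo"
  have "dZo > 0" using rc by (cases dZo) auto
  hence xy: "x < dXo" "y < dXo" "o1 < dZo" "o2 < dZo" and rc': "row = x*dZo + o1" "col = y*dZo + o2"
    using rc by (auto simp: x_o1_y_o2_def less_mult_imp_div_less)
  define T where "T = tensor_id dX dZ dM (choi_inv dX dZ \<tau>) (kraus (dX*dM) pa E (munit dXo x y))"
  have Tc: "T \<in> carrier_mat (dZ*dM) (dZ*dM)" by (simp add: T_def tensor_id_def)
  define H where "H a b p q i j = F b $$ (o1,p) * E a $$ (i*dM + p mod dM, x) *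
      \<tau> $$ (i*dZ + p div dM, j*dZ + q div dM) * cnj (F b $$ (o2,q) * E a $$ (j*dM + q mod dM, y))"
    for a b p q i j
  have Te: "T $$ (p,q) = (\<Sum>i<dX. \<Sum>j<dX. (\<Sum>a<pa. E a $$ (i*dM + p mod dM, x) * cnj (E a $$ (j*dM + q mod dM, y))) *
      \<tau> $$ (i*dZ + p div dM, j*dZ + q div dM))" if "p < dZ*dM" "q < dZ*dM" for p q
    unfolding T_def by (rule index_tensor_id_choi_inv_kraus_munit[OF E xy(1,2) that])
  have "(F b * T * adj (F b)) $$ (o1,o2) =
      (\<Sum>a<pa. \<Sum>p<dZ*dM. \<Sum>q<dZ*dM. \<Sum>i<dX. \<Sum>j<dX. H a b p q i j)" for b
  proof -
    have "(F b * T * adj (F b)) $$ (o1,o2) = (\<Sum>p<dZ*dM. \<Sum>q<dZ*dM. F b $$ (o1,p) * T $$ (p,q) * cnj (F b $$ (o2,q)))"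
      by (rule index_mult_mult_adj[OF F Tc xy(3,4)])
    also have "\<dots> = (\<Sum>p<dZ*dM. \<Sum>q<dZ*dM. \<Sum>i<dX. \<Sum>j<dX. \<Sum>a<pa. H a b p q i j)"
      unfolding H_def by (intro sum.cong refl) (simp add: Te sum_distrib_left sum_distrib_right mult_ac)
    finally show ?thesis
      by (simp only: sum.swap[of _ "{..<dX}" "{..<pa}"] sum.swap[of _ "{..<dZ*dM}" "{..<pa}"])
  qed
  hence "choi_supermap dX dZ dXo dZo R \<tau> $$ (row,col) =
      (\<Sum>b<pb. \<Sum>a<pa. \<Sum>p<dZ*dM. \<Sum>q<dZ*dM. \<Sum>i<dX. \<Sum>j<dX. H a b p q i j)"
    using rc xy R Epre Epost Tc lin_map_choi_inv
    by (simp add: choi_supermap_def choi_def x_o1_y_o2_def T_def kraus_def)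
  also have "\<dots> = (\<Sum>a<pa. \<Sum>b<pb. (?L a b * \<tau> * adj (?L a b)) $$ (row,col))"
    unfolding rc' index_supermap_kraus_op_sandwich[OF tau xy] H_def by (rule sum.swap)
  also have "\<dots> = kraus (dXo*dZo) (pa*pb) (\<lambda>k. ?L (k div pb) (k mod pb)) \<tau> $$ (row,col)"
    using rc by (simp add: kraus_def sum_lessThan_mult)
  finally show "choi_supermap dX dZ dXo dZo R \<tau> $$ (row,col) =
      kraus (dXo*dZo) (pa*pb) (\<lambda>k. ?L (k div pb) (k mod pb)) \<tau> $$ (row,col)" .
qed (auto simp: kraus_def choi_supermap_def choi_def)

section \<open>Normal form of a Kraus map through an isometry\<close>

lemma mat_inv:
  assumes A: "A \<in> carrier_mat n n" and inv: "invertible_mat A"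
  shows "mat_inv n A \<in> carrier_mat n n" "A * mat_inv n A = 1\<^sub>m n" "mat_inv n A * A = 1\<^sub>m n"
proof -
  obtain B where AB: "A * B = 1\<^sub>m n" and BA: "B * A = 1\<^sub>m (dim_row B)"
    using inv A unfolding invertible_mat_def inverts_mat_def by auto
  have B: "B \<in> carrier_mat n n"
    using arg_cong[OF AB, of dim_col] arg_cong[OF BA, of dim_col] A by (auto intro: carrier_matI)
  have BA': "B * A = 1\<^sub>m n" using BA B by simp
  have "\<exists>!C. C \<in> carrier_mat n n \<and> A * C = 1\<^sub>m n \<and> C * A = 1\<^sub>m n"
  proof (rule ex1I[of _ B])
    fix C assume "C \<in> carrier_mat n n \<and> A * C = 1\<^sub>m n \<and> C * A = 1\<^sub>m n"
    hence C: "C \<in> carrier_mat n n" "C * A = 1\<^sub>m n" by auto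
    have "C = C * (A * B)" using C AB by simp
    also have "\<dots> = (C * A) * B" by (rule assoc_mult_mat[OF C(1) A B, symmetric])
    finally show "C = B" using C B by simp
  qed (use B AB BA' in simp)
  from theI'[OF this] show "mat_inv n A \<in> carrier_mat n n" "A * mat_inv n A = 1\<^sub>m n" "mat_inv n A * A = 1\<^sub>m n"
    unfolding mat_inv_def by auto
qed

lemma invertible_mat_right_inverse:
  fixes A B :: "complex mat"
  assumes "A \<in> carrier_mat n n" "B \<in> carrier_mat n n" "A * B = 1\<^sub>m n"
  shows "invertible_mat A"
  using assms mat_mult_left_right_inverse[OF assms]
  unfolding invertible_mat_def inverts_mat_def square_mat.simps by auto

lemma adj_mat_inv_hermitian:
  assumes A: "A \<in> carrier_mat n n" "adj A = A" and inv: "invertible_mat A"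
  shows "A * adj (mat_inv n A) = 1\<^sub>m n" "adj (mat_inv n A) * A = 1\<^sub>m n"
proof -
  have "A * adj (mat_inv n A) = adj (mat_inv n A * A)" using A mat_inv(1)[OF A(1) inv] by (simp add: adj_mult)
  thus "A * adj (mat_inv n A) = 1\<^sub>m n" using mat_inv(3)[OF A(1) inv] by simp
  have "adj (mat_inv n A) * A = adj (A * mat_inv n A)" using A mat_inv(1)[OF A(1) inv] by (simp add: adj_mult)
  thus "adj (mat_inv n A) * A = 1\<^sub>m n" using mat_inv(2)[OF A(1) inv] by simp
qed

lemma mat_sqrt_hermitian_invertible:
  assumes A: "psd n A" and inv: "invertible_mat A"
  shows "mat_sqrt n A \<in> carrier_mat n n" "adj (mat_sqrt n A) = mat_sqrt n A" "invertible_mat (mat_sqrt n A)"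
proof -
  let ?s = "mat_sqrt n A"
  show s: "?s \<in> carrier_mat n n" using mat_sqrt(1)[OF A] by (simp add: psd_def)
  show "adj ?s = ?s" using psd_hermitian[OF mat_sqrt(1)[OF A]] .
  have Ac: "A \<in> carrier_mat n n" using A by (simp add: psd_def)
  have "?s * (?s * mat_inv n A) = (?s * ?s) * mat_inv n A"
    using s mat_inv(1)[OF Ac inv] by (simp add: assoc_mult_mat[of _ n n _ n _ n])
  also have "\<dots> = 1\<^sub>m n" using mat_sqrt(2)[OF A] mat_inv(2)[OF Ac inv] by simp
  finally show "invertible_mat ?s"
    using s mat_inv(1)[OF Ac inv] by (intro invertible_mat_right_inverse[of _ n "?s * mat_inv n A"]) auto
qed

lemma stack_blocks_kron_one_kraus:
  assumes A: "A \<in> carrier_mat m m" and K: "\<And>k. K k \<in> carrier_mat m n" and S: "S \<in> carrier_mat n n"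
    and pd: "p \<le> d" and X: "X \<in> carrier_mat n n"
  defines "V \<equiv> stack_blocks m n d (\<lambda>k. if k < p then A * K k * S else 0\<^sub>m m n)"
  shows "V * kron X (1\<^sub>m d) * adj V = A * kraus m p K (S * X * adj S) * adj A"
proof -
  have "(if k < p then A * K k * S else 0\<^sub>m m n) \<in> carrier_mat m n" for k
    using mult_carrier_mat[OF mult_carrier_mat[OF A K] S] by simp
  hence "V * kron X (1\<^sub>m d) * adj V = kraus m d (\<lambda>k. if k < p then A * K k * S else 0\<^sub>m m n) X"
    unfolding V_def by (rule stack_blocks_kron_one[OF _ X])
  also have "\<dots> = kraus m p (\<lambda>k. if k < p then A * K k * S else 0\<^sub>m m n) X"
    using pd X by (intro kraus_zero_tail) auto
  also have "\<dots> = kraus m p (\<lambda>k. A * (K k * S)) X"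
    by (intro kraus_cong) (simp add: assoc_mult_mat[OF A K S])
  also have "\<dots> = A * kraus m p (\<lambda>k. K k * S) X * adj A"
    using mult_carrier_mat[OF K S] by (intro mult_kraus_mult_adj[symmetric, OF A _ X])
  also have "kraus m p (\<lambda>k. K k * S) X = kraus m p K (S * X * adj S)"
    using kraus_mult_mult_adj[OF S X K] by simp
  finally show ?thesis .
qed

text \<open>With \<open>\<Phi>(s\<^sup>2) = r\<^sup>2\<close>, the Kraus operators \<open>r\<^sup>-\<^sup>1 K\<^sub>k s\<close> of \<open>X \<mapsto> r\<^sup>-\<^sup>1 \<Phi>(s X s) r\<^sup>-\<^sup>1\<close> form a
  co-isometry, since that map is unital.\<close>

lemma kraus_isometry_form:
  assumes K: "\<And>k. K k \<in> carrier_mat m n" and pd: "p \<le> d"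
    and s: "s \<in> carrier_mat n n" "adj s = s" "invertible_mat s"
    and r: "r \<in> carrier_mat m m" "adj r = r" "invertible_mat r"
    and Ks: "kraus m p K (s * s) = r * r"
  shows "\<exists>V. V \<in> carrier_mat m (n * d) \<and> V * adj V = 1\<^sub>m m \<and>
    (\<forall>\<tau>\<in>carrier_mat n n. kraus m p K \<tau> =
       r * V * kron (mat_inv n s * \<tau> * mat_inv n s) (1\<^sub>m d) * adj V * r)"
proof -
  define si ri where "si = mat_inv n s" "ri = mat_inv m r"
  have si: "si \<in> carrier_mat n n" "s * si = 1\<^sub>m n" "si * s = 1\<^sub>m n" using mat_inv[OF s(1,3)] by (auto simp: si_ri_def)
  have ri: "ri \<in> carrier_mat m m" "ri * r = 1\<^sub>m m" "adj ri * r = 1\<^sub>m m" "r * ri = 1\<^sub>m m" "r * adj ri = 1\<^sub>m m"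
    using mat_inv[OF r(1,3)] adj_mat_inv_hermitian[OF r] by (auto simp: si_ri_def)
  note assoc_n = assoc_mult_mat[of _ n n _ n _ n] and assoc_m = assoc_mult_mat[of _ m m _ m _ m]
  define V where "V = stack_blocks m n d (\<lambda>k. if k < p then ri * K k * s else 0\<^sub>m m n)"
  have V: "V \<in> carrier_mat m (n * d)" by (simp add: V_def)
  have VXV: "V * kron X (1\<^sub>m d) * adj V = ri * kraus m p K (s * X * s) * adj ri" if X: "X \<in> carrier_mat n n" for X
    using stack_blocks_kron_one_kraus[OF ri(1) K s(1) pd X] s(2) by (simp add: V_def)
  have "V * adj V = V * kron (1\<^sub>m n) (1\<^sub>m d) * adj V" unfolding kron_one_one using V by simp
  also have "\<dots> = ri * kraus m p K (s * 1\<^sub>m n * s) * adj ri" by (rule VXV) simp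
  also have "s * 1\<^sub>m n * s = s * s" using s(1) by simp
  also have "ri * kraus m p K (s * s) * adj ri = (ri * r) * (r * adj ri)"
    unfolding Ks using ri(1) r(1) by (simp add: assoc_m)
  also have "\<dots> = 1\<^sub>m m" using ri by simp
  finally have VV: "V * adj V = 1\<^sub>m m" .
  have "kraus m p K \<tau> = r * V * kron (si * \<tau> * si) (1\<^sub>m d) * adj V * r" if \<tau>: "\<tau> \<in> carrier_mat n n" for \<tau>
  proof -
    have X: "si * \<tau> * si \<in> carrier_mat n n" using si \<tau> by simp
    have kron: "kron (si * \<tau> * si) (1\<^sub>m d) \<in> carrier_mat (n * d) (n * d)"
      using X carrier_matD[OF si(1)] by (simp add: kron_def)
    have "s * (si * \<tau> * si) * s = (s * si) * \<tau> * (si * s)" using si(1) \<tau> s(1) by (simp add: assoc_n)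
    hence sXs: "s * (si * \<tau> * si) * s = \<tau>" using si \<tau> by simp
    have "r * V * kron (si * \<tau> * si) (1\<^sub>m d) * adj V * r = r * (V * kron (si * \<tau> * si) (1\<^sub>m d) * adj V) * r"
      by (simp only: assoc_mult_mat[OF r(1) V kron] assoc_mult_mat[OF r(1) mult_carrier_mat[OF V kron] adj_carrier[OF V]])
    also have "\<dots> = (r * ri) * kraus m p K \<tau> * (adj ri * r)"
      unfolding VXV[OF X] sXs using r(1) ri(1) by (simp add: assoc_m)
    finally show ?thesis using ri kraus_carrier[of m p K \<tau>] by simp
  qed
  thus ?thesis using V VV unfolding si_ri_def by blast
qed

lemma kraus_sqrt_isometry_form:
  assumes K: "\<And>k. K k \<in> carrier_mat m n" and pd: "p \<le> d"
    and \<sigma>: "psd n \<sigma>" "invertible_mat \<sigma>" and \<rho>: "psd m \<rho>" "invertible_mat \<rho>"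
    and K\<sigma>: "kraus m p K \<sigma> = \<rho>"
  shows "\<exists>V. V \<in> carrier_mat m (n * d) \<and> V * adj V = 1\<^sub>m m \<and>
    (\<forall>\<tau>\<in>carrier_mat n n. kraus m p K \<tau> = mat_sqrt m \<rho> * V *
       kron (mat_inv n (mat_sqrt n \<sigma>) * \<tau> * mat_inv n (mat_sqrt n \<sigma>)) (1\<^sub>m d) * adj V * mat_sqrt m \<rho>)"
  using kraus_isometry_form[OF K pd mat_sqrt_hermitian_invertible[OF \<sigma>] mat_sqrt_hermitian_invertible[OF \<rho>]]
    K\<sigma> mat_sqrt(2)[OF \<sigma>(1)] mat_sqrt(2)[OF \<rho>(1)] by simp

section \<open>Recovery superchannels for the partial trace\<close>

lemma superchannel_choi:
  assumes R: "superchannel dX dZ dX' dZ' R" and N: "lin_map dX dZ N"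
  shows "choi_supermap dX dZ dX' dZ' R (choi dX dZ N) = choi dX' dZ' (R N)"
proof -
  obtain dM Epre Epost where RR:
    "\<forall>N. lin_map dX dZ N \<longrightarrow> (\<forall>A\<in>carrier_mat dX' dX'. R N A = Epost (tensor_id dX dZ dM N (Epre A)))"
    using R unfolding superchannel_def by blast
  have "R (choi_inv dX dZ (choi dX dZ N)) A = R N A" if A: "A \<in> carrier_mat dX' dX'" for A
  proof -
    have "R (choi_inv dX dZ (choi dX dZ N)) A = Epost (tensor_id dX dZ dM (choi_inv dX dZ (choi dX dZ N)) (Epre A))"
      using RR lin_map_choi_inv A by blast
    also have "\<dots> = Epost (tensor_id dX dZ dM N (Epre A))"
      using choi_inv_choi[OF N] by (intro arg_cong[where f=Epost] tensor_id_cong)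
    also have "\<dots> = R N A" using RR N A by simp
    finally show ?thesis .
  qed
  thus ?thesis unfolding choi_supermap_def by (rule choi_cong)
qed

lemma superchannel_choi_kraus:
  assumes R: "superchannel dX dZ dX' dZ' R"
  shows "\<exists>p L. (\<forall>k. L k \<in> carrier_mat (dX'*dZ') (dX*dZ)) \<and>
    (\<forall>\<tau>\<in>carrier_mat (dX*dZ) (dX*dZ). choi_supermap dX dZ dX' dZ' R \<tau> = kraus (dX'*dZ') p L \<tau>) \<and>
    p \<le> supermap_rank dX dZ dX' dZ' R"
proof -
  obtain dM Epre Epost where Epre: "CPTP dX' (dX * dM) Epre" and Epost: "CPTP (dZ * dM) dZ' Epost"
    and RR: "\<forall>N. lin_map dX dZ N \<longrightarrow> (\<forall>A\<in>carrier_mat dX' dX'. R N A = Epost (tensor_id dX dZ dM N (Epre A)))"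
    using R unfolding superchannel_def by blast
  obtain pa E where E: "\<forall>k. E k \<in> carrier_mat (dX * dM) dX'"
    and EK: "\<forall>A\<in>carrier_mat dX' dX'. Epre A = kraus (dX * dM) pa E A"
    using kraus_of_completely_positive Epre unfolding CPTP_def by blast
  obtain pb F where F: "\<forall>k. F k \<in> carrier_mat dZ' (dZ * dM)"
    and FK: "\<forall>B\<in>carrier_mat (dZ * dM) (dZ * dM). Epost B = kraus dZ' pb F B"
    using kraus_of_completely_positive Epost unfolding CPTP_def by blast
  define L where "L k = supermap_kraus_op dX' dX dZ dM dZ' (E (k div pb)) (F (k mod pb))" for k
  have L: "L k \<in> carrier_mat (dX'*dZ') (dX*dZ)" for k by (simp add: L_def)
  have \<Phi>: "\<forall>\<tau>\<in>carrier_mat (dX*dZ) (dX*dZ). choi_supermap dX dZ dX' dZ' R \<tau> = kraus (dX'*dZ') (pa*pb) L \<tau>"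
    using choi_supermap_kraus[OF E[rule_format] F[rule_format] EK FK RR] unfolding L_def by blast
  have "lin_map (dX*dZ) (dX'*dZ') (choi_supermap dX dZ dX' dZ' R)"
    using \<Phi> by (intro lin_map_cong[OF lin_map_kraus[OF L]]) simp
  from kraus_of_choi[OF this psd_choi_kraus[OF L \<Phi>]] show ?thesis
    unfolding supermap_rank_def by blast
qed

lemma lin_map_psd_choi_ptrace2:
  assumes "lin_map dX (dZ*dA) \<Gamma>" "completely_positive dX (dZ*dA) \<Gamma>"
  shows "lin_map dX dZ (\<lambda>A. ptrace2 dZ dA (\<Gamma> A))" "psd (dX*dZ) (choi dX dZ (\<lambda>A. ptrace2 dZ dA (\<Gamma> A)))"
proof -
  obtain p K where K: "\<forall>k. K k \<in> carrier_mat (dZ*dA) dX" and \<Gamma>K: "\<forall>A\<in>carrier_mat dX dX. \<Gamma> A = kraus (dZ*dA) p K A"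
    using kraus_of_completely_positive[OF assms] by blast
  define K' where "K' k' = mat dZ dX (\<lambda>(z,i). K (k' div dA) $$ (z*dA + k' mod dA, i))" for k'
  have K': "K' k \<in> carrier_mat dZ dX" for k by (simp add: K'_def)
  have S: "\<forall>A\<in>carrier_mat dX dX. ptrace2 dZ dA (\<Gamma> A) = kraus dZ (p*dA) K' A"
    unfolding K'_def using \<Gamma>K ptrace2_kraus K by simp
  show "lin_map dX dZ (\<lambda>A. ptrace2 dZ dA (\<Gamma> A))"
    using S by (intro lin_map_cong[OF lin_map_kraus[OF K']]) simp
  show "psd (dX*dZ) (choi dX dZ (\<lambda>A. ptrace2 dZ dA (\<Gamma> A)))"
    by (rule psd_choi_kraus[OF K' S])
qed

theorem lemma2:
  fixes dX dZ dA :: nat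
    and \<Gamma> :: "complex mat \<Rightarrow> complex mat"
    and \<R> :: "(complex mat \<Rightarrow> complex mat) \<Rightarrow> (complex mat \<Rightarrow> complex mat)"
  assumes dims: "0 < dX" "0 < dZ" "0 < dA"
    and Gamma: "CPTP dX (dZ * dA) \<Gamma>"
    and full1: "invertible_mat (choi dX (dZ * dA) \<Gamma>)"
    and full2: "invertible_mat (choi dX dZ (\<lambda>A. ptrace2 dZ dA (\<Gamma> A)))"
    and R: "superchannel dX dZ dX (dZ * dA) \<R>"
    and recov: "\<forall>A \<in> carrier_mat dX dX. \<R> (\<lambda>B. ptrace2 dZ dA (\<Gamma> B)) A = \<Gamma> A"
  shows "\<exists>dR V. dR \<ge> dA \<and> V \<in> carrier_mat (dX * dZ * dA) (dX * dZ * dR) \<and>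
           V * adj V = 1\<^sub>m (dX * dZ * dA) \<and>
           (\<forall>\<tau> \<in> carrier_mat (dX * dZ) (dX * dZ).
              choi_supermap dX dZ dX (dZ * dA) \<R> \<tau> =
                mat_sqrt (dX * (dZ * dA)) (choi dX (dZ * dA) \<Gamma>) * V *
                kron (mat_inv (dX * dZ) (mat_sqrt (dX * dZ) (choi dX dZ (\<lambda>A. ptrace2 dZ dA (\<Gamma> A))))
                      * \<tau> *
                      mat_inv (dX * dZ) (mat_sqrt (dX * dZ) (choi dX dZ (\<lambda>A. ptrace2 dZ dA (\<Gamma> A)))))
                     (1\<^sub>m dR) *
                adj V * mat_sqrt (dX * (dZ * dA)) (choi dX (dZ * dA) \<Gamma>)) \<and>
           (supermap_rank dX dZ dX (dZ * dA) \<R> = dA \<longrightarrow>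
              dR = dA \<and> adj V * V = 1\<^sub>m (dX * dZ * dR) \<and> V * adj V = 1\<^sub>m (dX * dZ * dA))"
proof -
  define \<sigma> where "\<sigma> = choi dX dZ (\<lambda>A. ptrace2 dZ dA (\<Gamma> A))"
  define \<rho> where "\<rho> = choi dX (dZ * dA) \<Gamma>"
  have lin\<Gamma>: "lin_map dX (dZ * dA) \<Gamma>" and cp\<Gamma>: "completely_positive dX (dZ * dA) \<Gamma>"
    using Gamma by (auto simp: CPTP_def)
  obtain p L where L: "\<forall>k. L k \<in> carrier_mat (dX * (dZ * dA)) (dX * dZ)"
    and \<Phi>: "\<forall>\<tau>\<in>carrier_mat (dX * dZ) (dX * dZ). choi_supermap dX dZ dX (dZ * dA) \<R> \<tau> = kraus (dX * (dZ * dA)) p L \<tau>"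
    and rank: "p \<le> supermap_rank dX dZ dX (dZ * dA) \<R>"
    using superchannel_choi_kraus[OF R] by blast
  have \<sigma>: "psd (dX * dZ) \<sigma>" and \<rho>: "psd (dX * (dZ * dA)) \<rho>"
    using lin_map_psd_choi_ptrace2[OF lin\<Gamma> cp\<Gamma>] psd_choi_of_completely_positive[OF lin\<Gamma> cp\<Gamma>] by (auto simp: \<sigma>_def \<rho>_def)
  have "choi_supermap dX dZ dX (dZ * dA) \<R> \<sigma> = \<rho>"
    unfolding \<sigma>_def \<rho>_def superchannel_choi[OF R lin_map_psd_choi_ptrace2(1)[OF lin\<Gamma> cp\<Gamma>]] using recov by (intro choi_cong) simp
  hence "kraus (dX * (dZ * dA)) p L \<sigma> = \<rho>" using \<Phi> \<sigma> by (simp add: psd_def)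
  then obtain V where V: "V \<in> carrier_mat (dX * (dZ * dA)) (dX * dZ * max p dA)" "V * adj V = 1\<^sub>m (dX * (dZ * dA))"
    and formula: "\<forall>\<tau>\<in>carrier_mat (dX * dZ) (dX * dZ). kraus (dX * (dZ * dA)) p L \<tau> = mat_sqrt (dX * (dZ * dA)) \<rho> * V *
       kron (mat_inv (dX * dZ) (mat_sqrt (dX * dZ) \<sigma>) * \<tau> * mat_inv (dX * dZ) (mat_sqrt (dX * dZ) \<sigma>)) (1\<^sub>m (max p dA)) *
       adj V * mat_sqrt (dX * (dZ * dA)) \<rho>"
    using kraus_sqrt_isometry_form[OF _ _ \<sigma> full2[folded \<sigma>_def] \<rho> full1[folded \<rho>_def], of L p "max p dA"] L by auto
  have "adj V * V = 1\<^sub>m (dX * dZ * dA)" if "max p dA = dA"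
    using mat_mult_left_right_inverse[of V "dX * dZ * dA" "adj V"] V that by (simp add: mult.assoc)
  thus ?thesis
    using V formula \<Phi> rank unfolding \<sigma>_def \<rho>_def
    by (intro exI[of _ "max p dA"] exI[of _ V]) (auto simp: mult.assoc)
qed

end
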